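(* Let $d\le k$, let $R$ be a $d\times k$ matrix, $f:\{1,\dots,k\}\to\mathcal P(\{1,\dots,d\})$, and for each $n$ let $W^n,X^n\in C([0,\infty),\mathbb R^d)$, $Y^n\in C([0,\infty),\mathbb R^k)$ be continuous processes on a probability space $(\Omega^n,\mathcal F^n,P^n)$ satisfying: (i) $W^n=X^n+RY^n$; (ii) $W^n(t)\in\mathbb R^d_{\ge0}$ for all $t$ a.s.; (iii) $X^n$ converges in distribution to a $d$-dimensional Brownian motion with drift $0$, some covariance matrix $\Sigma$, started at $0$; (iv) there are constants $\delta^n\to0$ such that a.s. for each $j$: $Y^n_j(0)=0$, $Y^n_j$ is nondecreasing, and $\int_0^\infty\mathbf 1(W^n_i(s)>\delta^n\text{ for some }i\in f(j))\,dY^n_j(s)=0$. Suppose there are càdlàg processes $\check W^n,\check X^n\in D([0,\infty),\mathbb R^d)$, $\check Y^n\in D([0,\infty),\mathbb R^k)$ on the same spaces such that $X^n-\check X^n$, $Y^n-\check Y^n$, $W^n-\check W^n$ converge to $\mathbf 0$ in probability (in $D$), such that $\{\check X^n(t)-\check X^n(0)\}_{n\ge1}$ is uniformly integrable for each $t\ge0$, and such that for each $n$, $(\check X^n(t)-\check X^n(0))_{t\ge0}$ is a $P^n$-martingale with respect to the filtration generated by $(\check W^n,\check X^n,\check Y^n)$. Then for every weak limit point $(W',X',Y')$ of $\{(W^n,X^n,Y^n)\}_{n\ge1}$, $X'$ is a martingale with respect to $\mathcal F'_t=\sigma\{(W',X',Y')(s):0\le s\le t\}$.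
   Context: $D([0,\infty),\mathbb R^m)$ denotes the space of càdlàg paths with the Skorokhod topology; weak limit points are taken in $C([0,\infty),\mathbb R^{2d+k})$ with the topology of uniform convergence on compacts. *)

theory Defs
  imports "HOL-Probability.Probability"
begin

text \<open>Paths are functions real => 'e; only their values on [0,infinity) matter.\<close>

definition cpath :: "(real \<Rightarrow> 'e::topological_space) \<Rightarrow> bool" where
  "cpath x \<longleftrightarrow> continuous_on {0..} x"

definition cadlag :: "(real \<Rightarrow> 'e::topological_space) \<Rightarrow> bool" where
  "cadlag x \<longleftrightarrow> (\<forall>t\<ge>0. continuous (at_right t) x \<and> (t > 0 \<longrightarrow> (\<exists>l. (x \<longlongrightarrow> l) (at_left t))))"

definition lu_conv :: "(nat \<Rightarrow> real \<Rightarrow> 'e::metric_space) \<Rightarrow> (real \<Rightarrow> 'e) \<Rightarrow> bool" where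
  "lu_conv xs x \<longleftrightarrow> (\<forall>T. uniform_limit {0..T} xs x sequentially)"

definition bc_functional :: "((real \<Rightarrow> 'e::metric_space) \<Rightarrow> real) \<Rightarrow> bool" where
  "bc_functional F \<longleftrightarrow>
     (\<forall>x y. (\<forall>t\<ge>0. x t = y t) \<longrightarrow> F x = F y) \<and>
     (\<exists>B. \<forall>x. cpath x \<longrightarrow> \<bar>F x\<bar> \<le> B) \<and>
     (\<forall>xs x. (\<forall>n. cpath (xs n)) \<and> cpath x \<and> lu_conv xs x \<longrightarrow> (\<lambda>n. F (xs n)) \<longlonglongrightarrow> F x)"

definition conv_dist ::
  "(nat \<Rightarrow> 'a measure) \<Rightarrow> (nat \<Rightarrow> 'a \<Rightarrow> real \<Rightarrow> 'e::metric_space) \<Rightarrow> 'b measure \<Rightarrow> ('b \<Rightarrow> real \<Rightarrow> 'e) \<Rightarrow> bool" where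
  "conv_dist M Z N Z' \<longleftrightarrow>
     (\<forall>F. bc_functional F \<longrightarrow>
        (\<lambda>n. \<integral>\<omega>. F (Z n \<omega>) \<partial>M n) \<longlonglongrightarrow> (\<integral>\<omega>. F (Z' \<omega>) \<partial>N))"

definition brownian_motion :: "'b measure \<Rightarrow> real^'d^'d \<Rightarrow> ('b \<Rightarrow> real \<Rightarrow> real^'d) \<Rightarrow> bool" where
  "brownian_motion N \<Sigma> B \<longleftrightarrow>
     prob_space N \<and>
     (\<forall>t. (\<lambda>\<omega>. B \<omega> t) \<in> borel_measurable N) \<and>
     (\<forall>\<omega>\<in>space N. B \<omega> 0 = 0 \<and> cpath (B \<omega>)) \<and>
     (\<forall>(ts::nat \<Rightarrow> real) m. 0 \<le> ts 0 \<and> strict_mono ts \<longrightarrow>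
        prob_space.indep_vars N (\<lambda>_. borel) (\<lambda>i \<omega>. B \<omega> (ts (Suc i)) - B \<omega> (ts i)) {..<m}) \<and>
     (\<forall>s t u. 0 \<le> s \<and> s \<le> t \<longrightarrow>
        (\<integral>\<omega>. cis (u \<bullet> (B \<omega> t - B \<omega> s)) \<partial>N) =
          complex_of_real (exp (- (t - s) * (u \<bullet> (\<Sigma> *v u)) / 2)))"

text \<open>Convergence in probability to the zero path (uniformly on compacts; for the continuous
  limit 0 this is the same as convergence in probability in the Skorokhod space D).\<close>
definition conv_prob_zero :: "(nat \<Rightarrow> 'a measure) \<Rightarrow> (nat \<Rightarrow> 'a \<Rightarrow> real \<Rightarrow> 'e::real_normed_vector) \<Rightarrow> bool" where
  "conv_prob_zero M Z \<longleftrightarrow>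
     (\<forall>T \<epsilon>. \<epsilon> > 0 \<longrightarrow>
        (\<lambda>n. measure (M n) {\<omega>\<in>space (M n). \<exists>t\<in>{0..T}. norm (Z n \<omega> t) > \<epsilon>}) \<longlonglongrightarrow> 0)"

definition unif_integrable :: "(nat \<Rightarrow> 'a measure) \<Rightarrow> (nat \<Rightarrow> 'a \<Rightarrow> 'e::real_normed_vector) \<Rightarrow> bool" where
  "unif_integrable M Z \<longleftrightarrow>
     ((\<lambda>K. \<Squnion>n. \<integral>\<^sup>+\<omega>. ennreal (norm (Z n \<omega>)) * indicator {\<omega>. norm (Z n \<omega>) > K} \<omega> \<partial>M n)
        \<longlongrightarrow> 0) at_top"

definition nat_filt :: "'a measure \<Rightarrow> ('a \<Rightarrow> real \<Rightarrow> 'e::topological_space) \<Rightarrow> real \<Rightarrow> 'a set set" where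
  "nat_filt M V t =
     sigma_sets (space M) (\<Union>s\<in>{0..t}. {(\<lambda>\<omega>. V \<omega> s) -` A \<inter> space M | A. A \<in> sets borel})"

text \<open>Martingale (indexed by t >= 0) w.r.t. a filtration F: adapted, integrable, and
  E[Z t | F s] = Z s, written via the defining property of conditional expectation.\<close>
definition martingale :: "'a measure \<Rightarrow> (real \<Rightarrow> 'a set set) \<Rightarrow> ('a \<Rightarrow> real \<Rightarrow> 'e::{banach,second_countable_topology}) \<Rightarrow> bool" where
  "martingale M F Z \<longleftrightarrow>
     (\<forall>t\<ge>0. \<forall>A\<in>sets borel. (\<lambda>\<omega>. Z \<omega> t) -` A \<inter> space M \<in> F t) \<and>
     (\<forall>t\<ge>0. integrable M (\<lambda>\<omega>. Z \<omega> t)) \<and>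
     (\<forall>s t A. 0 \<le> s \<and> s \<le> t \<and> A \<in> F s \<longrightarrow>
        set_lebesgue_integral M A (\<lambda>\<omega>. Z \<omega> t) = set_lebesgue_integral M A (\<lambda>\<omega>. Z \<omega> s))"

end

theory Submission
  imports Defs
begin

text \<open>
  Fix \<open>0 \<le> s \<le> t\<close> and a bounded Lipschitz function \<open>G\<close> of finitely many values of a path
  on \<open>[0, s]\<close>. The martingale property of \<open>X\<^sup>c\<^sup>n(t) - X\<^sup>c\<^sup>n(0)\<close> gives
  \<open>E[(X\<^sup>c\<^sup>n(t) - X\<^sup>c\<^sup>n(s)) G(W\<^sup>c\<^sup>n, X\<^sup>c\<^sup>n, Y\<^sup>c\<^sup>n)] = 0\<close>. Replacing the cadlag
  processes by the continuous ones and truncating the increment at level \<open>K\<close> turns the left-hand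
  side into the expectation of a bounded continuous functional of \<open>(W\<^sup>n, X\<^sup>n, Y\<^sup>n)\<close>, up to
  errors that vanish in probability (so in \<open>L\<^sup>1\<close>, being bounded) and a truncation error that
  uniform integrability makes small uniformly in \<open>n\<close>. Passing to the weak limit and then
  letting \<open>K \<rightarrow> \<infinity>\<close> by dominated convergence (the limit is integrable by the same uniform
  integrability) yields \<open>E[(X'(t) - X'(s)) G(W', X', Y')] = 0\<close>. Lipschitz cylinder functions
  approximate indicators of open cylinder sets, which form an intersection-stable generator of
  \<open>\<F>'\<^sub>s\<close>, so a Dynkin argument gives the martingale property. Everything is done one
  coordinate of \<open>X'\<close> at a time.
\<close>

section \<open>Convergence in probability\<close>

definition vanishes_in_prob :: "(nat \<Rightarrow> 'a measure) \<Rightarrow> (nat \<Rightarrow> 'a \<Rightarrow> real) \<Rightarrow> bool" where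
  "vanishes_in_prob M Y \<longleftrightarrow> (\<forall>e>0. (\<lambda>n. measure (M n) {\<omega>\<in>space (M n). Y n \<omega> > e}) \<longlonglongrightarrow> 0)"

lemma vanishes_in_prob_0: "vanishes_in_prob M (\<lambda>n \<omega>. 0)"
  unfolding vanishes_in_prob_def by simp

lemma vanishes_in_prob_subseq:
  assumes "vanishes_in_prob M Y" "strict_mono r"
  shows "vanishes_in_prob (\<lambda>n. M (r n)) (\<lambda>n. Y (r n))"
  using assms unfolding vanishes_in_prob_def by (auto intro: LIMSEQ_subseq_LIMSEQ[unfolded comp_def])

lemma vanishes_in_prob_le_add:
  assumes P: "\<And>n. prob_space (M n)"
    and meas: "\<And>n. Y1 n \<in> borel_measurable (M n)" "\<And>n. Y2 n \<in> borel_measurable (M n)"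
    and le: "\<And>n \<omega>. \<omega> \<in> space (M n) \<Longrightarrow> Y n \<omega> \<le> Y1 n \<omega> + Y2 n \<omega>"
    and Y1: "vanishes_in_prob M Y1" and Y2: "vanishes_in_prob M Y2"
  shows "vanishes_in_prob M Y"
  unfolding vanishes_in_prob_def
proof (intro allI impI)
  fix e :: real assume e: "e > 0"
  define S where "S Z n = {\<omega>\<in>space (M n). Z n \<omega> > e/2}" for Z :: "nat \<Rightarrow> 'a \<Rightarrow> real" and n
  have "(\<lambda>n. measure (M n) (S Z n)) \<longlonglongrightarrow> 0" if "vanishes_in_prob M Z" for Z
    using that half_gt_zero[OF e] unfolding vanishes_in_prob_def S_def by blast
  then have lim: "(\<lambda>n. measure (M n) (S Y1 n) + measure (M n) (S Y2 n)) \<longlonglongrightarrow> 0"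
    using tendsto_add[OF _ _] Y1 Y2 by fastforce
  have bound: "measure (M n) {\<omega>\<in>space (M n). Y n \<omega> > e} \<le> measure (M n) (S Y1 n) + measure (M n) (S Y2 n)" for n
  proof -
    interpret prob_space "M n" by (rule P)
    have S: "S Y1 n \<in> events" "S Y2 n \<in> events"
      unfolding S_def using meas by measurable
    have "measure (M n) {\<omega>\<in>space (M n). Y n \<omega> > e} \<le> measure (M n) (S Y1 n \<union> S Y2 n)"
      using S le[of _ n] by (intro finite_measure_mono) (force simp: S_def)+
    also have "\<dots> \<le> measure (M n) (S Y1 n) + measure (M n) (S Y2 n)"
      using S by (rule measure_Un_le)
    finally show ?thesis .
  qed
  show "(\<lambda>n. measure (M n) {\<omega>\<in>space (M n). Y n \<omega> > e}) \<longlonglongrightarrow> 0"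
    by (rule tendsto_sandwich[OF _ _ tendsto_const lim]) (use bound in auto)
qed

lemma vanishes_in_prob_le:
  assumes P: "\<And>n. prob_space (M n)" and meas: "\<And>n. Y1 n \<in> borel_measurable (M n)"
    and le: "\<And>n \<omega>. \<omega> \<in> space (M n) \<Longrightarrow> Y n \<omega> \<le> Y1 n \<omega>"
    and Y1: "vanishes_in_prob M Y1"
  shows "vanishes_in_prob M Y"
  by (rule vanishes_in_prob_le_add[OF P meas, of "\<lambda>n \<omega>. 0"]) (use le Y1 vanishes_in_prob_0 in auto)

lemma vanishes_in_prob_cmult:
  assumes Y: "vanishes_in_prob M Y" and c: "c \<ge> 0"
  shows "vanishes_in_prob M (\<lambda>n \<omega>. c * Y n \<omega>)"
proof (cases "c = 0")
  case True
  then show ?thesis by (simp add: vanishes_in_prob_0)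
next
  case False
  with c have "c > 0" by simp
  then have "{\<omega>\<in>space (M n). c * Y n \<omega> > e} = {\<omega>\<in>space (M n). Y n \<omega> > e / c}" for n e
    by (auto simp: field_simps)
  with Y \<open>c > 0\<close> show ?thesis
    unfolding vanishes_in_prob_def by simp
qed

lemma vanishes_in_prob_integral_tendsto_0:
  fixes Y :: "nat \<Rightarrow> 'a \<Rightarrow> real"
  assumes P: "\<And>n. prob_space (M n)" and meas: "\<And>n. Y n \<in> borel_measurable (M n)"
    and bnd: "\<And>n \<omega>. \<omega> \<in> space (M n) \<Longrightarrow> 0 \<le> Y n \<omega> \<and> Y n \<omega> \<le> B"
    and Y: "vanishes_in_prob M Y"
  shows "(\<lambda>n. \<integral>\<omega>. Y n \<omega> \<partial>M n) \<longlonglongrightarrow> 0"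
proof (rule LIMSEQ_I)
  fix r :: real assume r: "r > 0"
  have B: "0 \<le> B"
  proof -
    interpret prob_space "M 0" by (rule P)
    obtain \<omega> where "\<omega> \<in> space (M 0)" using not_empty by blast
    then show ?thesis using bnd[of \<omega> 0] by linarith
  qed
  define S where "S n = {\<omega>\<in>space (M n). Y n \<omega> > r/2}" for n
  have "(\<lambda>n. B * measure (M n) (S n)) \<longlonglongrightarrow> B * 0"
    using Y[unfolded vanishes_in_prob_def, rule_format, of "r/2"] r unfolding S_def
    by (intro tendsto_mult tendsto_const) auto
  from LIMSEQ_D[OF this half_gt_zero[OF r]] obtain n0
    where n0: "\<And>n. n \<ge> n0 \<Longrightarrow> norm (B * measure (M n) (S n) - B * 0) < r/2"
    by blast
  have "\<bar>\<integral>\<omega>. Y n \<omega> \<partial>M n\<bar> < r" if "n \<ge> n0" for n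
  proof -
    interpret prob_space "M n" by (rule P)
    have S: "S n \<in> events" unfolding S_def using meas by measurable
    have iY: "integrable (M n) (Y n)"
      by (rule integrable_const_bound[where B=B]) (use bnd meas in auto)
    have iS: "integrable (M n) (\<lambda>\<omega>. r/2 + B * indicator (S n) \<omega>)"
      using S B r by (intro integrable_const_bound[where B="r/2+B"]) (auto simp: indicator_def)
    have "(\<integral>\<omega>. Y n \<omega> \<partial>M n) \<le> (\<integral>\<omega>. r/2 + B * indicator (S n) \<omega> \<partial>M n)"
    proof (rule integral_mono[OF iY iS])
      fix \<omega> assume "\<omega> \<in> space (M n)"
      then show "Y n \<omega> \<le> r/2 + B * indicator (S n) \<omega>"
        using bnd[of \<omega> n] r by (auto simp: indicator_def S_def)
    qed
    also have "\<dots> = r/2 + B * measure (M n) (S n)"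
      using S by (subst Bochner_Integration.integral_add) (auto simp: prob_space emeasure_finite less_top[symmetric])
    finally have "(\<integral>\<omega>. Y n \<omega> \<partial>M n) \<le> r/2 + B * measure (M n) (S n)" .
    moreover have "0 \<le> (\<integral>\<omega>. Y n \<omega> \<partial>M n)" using bnd by (intro integral_nonneg_AE) auto
    moreover have "B * measure (M n) (S n) < r/2" using n0[OF that] B by auto
    ultimately show ?thesis by linarith
  qed
  then show "\<exists>n0. \<forall>n\<ge>n0. norm ((\<integral>\<omega>. Y n \<omega> \<partial>M n) - 0) < r" by auto
qed

lemma sets_Collect_ex_le_right_continuous:
  fixes g :: "'a \<Rightarrow> real \<Rightarrow> real"
  assumes meas: "\<And>t. (\<lambda>\<omega>. g \<omega> t) \<in> borel_measurable M"
    and rc: "\<And>\<omega> t. \<omega> \<in> space M \<Longrightarrow> t \<ge> 0 \<Longrightarrow> continuous (at_right t) (g \<omega>)"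
    and T: "T \<ge> 0"
  shows "{\<omega>\<in>space M. \<exists>t\<in>{0..T}. g \<omega> t > e} \<in> sets M"
proof -
  define Q where "Q = insert T (\<rat> \<inter> {0..T})"
  have "{\<omega>\<in>space M. \<exists>t\<in>{0..T}. g \<omega> t > e} = (\<Union>q\<in>Q. {\<omega>\<in>space M. g \<omega> q > e})"
  proof (intro equalityI subsetI)
    fix \<omega> assume "\<omega> \<in> {\<omega>\<in>space M. \<exists>t\<in>{0..T}. g \<omega> t > e}"
    then obtain t where \<omega>: "\<omega> \<in> space M" and t: "0 \<le> t" "t \<le> T" and gt: "g \<omega> t > e" by auto
    show "\<omega> \<in> (\<Union>q\<in>Q. {\<omega>\<in>space M. g \<omega> q > e})"
    proof (cases "t = T")
      case True
      then show ?thesis using \<omega> gt by (auto simp: Q_def)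
    next
      case False
      have "(g \<omega> \<longlongrightarrow> g \<omega> t) (at_right t)"
        using rc[OF \<omega> t(1)] by (simp add: continuous_within)
      then have "\<forall>\<^sub>F s in at_right t. e < g \<omega> s" using gt by (rule order_tendstoD(1))
      then obtain b where "b > t" and b: "\<And>s. s > t \<Longrightarrow> s < b \<Longrightarrow> e < g \<omega> s"
        by (auto simp: eventually_at_right[of t "t+1"])
      then obtain q where q: "q \<in> \<rat>" "t < q" "q < min b T"
        using Rats_dense_in_real[of t "min b T"] False t by auto
      then have "q \<in> Q" "e < g \<omega> q" using b t by (auto simp: Q_def)
      then show ?thesis using \<omega> by auto
    qed
  qed (use T in \<open>auto simp: Q_def\<close>)
  moreover have "countable Q"
    unfolding Q_def by (auto intro: countable_subset[OF _ countable_rat])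
  then have "(\<Union>q\<in>Q. {\<omega>\<in>space M. g \<omega> q > e}) \<in> sets M"
    by (intro sets.countable_UN') (auto intro: measurable_sets_Collect[OF meas] simp: image_subset_iff)
  ultimately show ?thesis by simp
qed

lemma vanishes_in_prob_at_if_conv_prob_zero:
  fixes Z :: "nat \<Rightarrow> 'a \<Rightarrow> real \<Rightarrow> 'e::real_normed_vector"
  assumes P: "\<And>n. prob_space (M n)" and Z: "conv_prob_zero M Z"
    and meas: "\<And>n t. (\<lambda>\<omega>. Z n \<omega> t) \<in> borel_measurable (M n)"
    and rc: "\<And>n \<omega> t. \<omega> \<in> space (M n) \<Longrightarrow> t \<ge> 0 \<Longrightarrow> continuous (at_right t) (Z n \<omega>)"
    and t: "t \<ge> 0"
  shows "vanishes_in_prob M (\<lambda>n \<omega>. norm (Z n \<omega> t))"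
  unfolding vanishes_in_prob_def
proof (intro allI impI)
  fix e :: real assume "e > 0"
  then have lim: "(\<lambda>n. measure (M n) {\<omega>\<in>space (M n). \<exists>s\<in>{0..t}. norm (Z n \<omega> s) > e}) \<longlonglongrightarrow> 0"
    using Z unfolding conv_prob_zero_def by auto
  have "measure (M n) {\<omega>\<in>space (M n). norm (Z n \<omega> t) > e}
          \<le> measure (M n) {\<omega>\<in>space (M n). \<exists>s\<in>{0..t}. norm (Z n \<omega> s) > e}" for n
  proof -
    interpret prob_space "M n" by (rule P)
    have "{\<omega>\<in>space (M n). \<exists>s\<in>{0..t}. norm (Z n \<omega> s) > e} \<in> events"
      using meas rc by (intro sets_Collect_ex_le_right_continuous[OF _ _ t] continuous_norm) auto
    then show ?thesis using t by (intro finite_measure_mono) auto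
  qed
  then show "(\<lambda>n. measure (M n) {\<omega>\<in>space (M n). norm (Z n \<omega> t) > e}) \<longlonglongrightarrow> 0"
    by (intro tendsto_sandwich[OF _ _ tendsto_const lim] always_eventually allI) auto
qed

lemma bc_functionalI:
  fixes F :: "(real \<Rightarrow> 'e::metric_space) \<Rightarrow> real"
  assumes "\<And>x y. (\<forall>t\<ge>0. x t = y t) \<Longrightarrow> F x = F y"
    and "\<And>x. \<bar>F x\<bar> \<le> B"
    and "\<And>xs x. (\<And>u. u \<ge> 0 \<Longrightarrow> (\<lambda>n. xs n u) \<longlonglongrightarrow> x u) \<Longrightarrow> (\<lambda>n. F (xs n)) \<longlonglongrightarrow> F x"
  shows "bc_functional F"
  unfolding bc_functional_def
proof (intro conjI allI impI)
  fix xs :: "nat \<Rightarrow> real \<Rightarrow> 'e" and x assume "(\<forall>n. cpath (xs n)) \<and> cpath x \<and> lu_conv xs x"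
  then have "(\<lambda>n. xs n u) \<longlonglongrightarrow> x u" if "u \<ge> 0" for u
    using that unfolding lu_conv_def by (intro tendsto_uniform_limitI[where S="{0..u}"]) auto
  then show "(\<lambda>n. F (xs n)) \<longlonglongrightarrow> F x" by (rule assms(3))
qed (use assms in auto)

lemma vanishes_in_prob_at_0_if_conv_dist:
  fixes X :: "nat \<Rightarrow> 'a \<Rightarrow> real \<Rightarrow> 'e::real_normed_vector" and B :: "'c \<Rightarrow> real \<Rightarrow> 'e"
  assumes P: "\<And>n. prob_space (M n)" and X: "conv_dist M X L B"
    and B0: "\<And>\<omega>. \<omega> \<in> space L \<Longrightarrow> B \<omega> 0 = 0"
    and meas: "\<And>n. (\<lambda>\<omega>. X n \<omega> 0) \<in> borel_measurable (M n)"
  shows "vanishes_in_prob M (\<lambda>n \<omega>. norm (X n \<omega> 0))"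
  unfolding vanishes_in_prob_def
proof (intro allI impI)
  fix e :: real assume e: "e > 0"
  define F where "F v = min 1 (norm (v 0))" for v :: "real \<Rightarrow> 'e"
  have "bc_functional F"
    unfolding F_def by (rule bc_functionalI[where B=1]) (auto intro!: tendsto_intros)
  then have "(\<lambda>n. \<integral>\<omega>. F (X n \<omega>) \<partial>M n) \<longlonglongrightarrow> (\<integral>\<omega>. F (B \<omega>) \<partial>L)"
    using X unfolding conv_dist_def by auto
  also have "(\<integral>\<omega>. F (B \<omega>) \<partial>L) = 0"
    by (subst Bochner_Integration.integral_cong[where g="\<lambda>_. 0"]) (auto simp: F_def B0)
  finally have lim: "(\<lambda>n. (\<integral>\<omega>. F (X n \<omega>) \<partial>M n) / min e 1) \<longlonglongrightarrow> 0"
    using tendsto_divide_zero by blast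
  have "measure (M n) {\<omega>\<in>space (M n). norm (X n \<omega> 0) > e} \<le> (\<integral>\<omega>. F (X n \<omega>) \<partial>M n) / min e 1" for n
  proof -
    interpret prob_space "M n" by (rule P)
    have Fm: "(\<lambda>\<omega>. F (X n \<omega>)) \<in> borel_measurable (M n)" unfolding F_def using meas[of n] by measurable
    then have iF: "integrable (M n) (\<lambda>\<omega>. F (X n \<omega>))"
      by (intro integrable_const_bound[where B=1]) (auto simp: F_def)
    have "{\<omega>\<in>space (M n). F (X n \<omega>) \<ge> min e 1} \<in> events" using Fm by measurable
    then have "measure (M n) {\<omega>\<in>space (M n). norm (X n \<omega> 0) > e}
        \<le> measure (M n) {\<omega>\<in>space (M n). F (X n \<omega>) \<ge> min e 1}"
      by (rule finite_measure_mono[rotated]) (auto simp: F_def)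
    also have "\<dots> \<le> (\<integral>\<omega>. F (X n \<omega>) \<partial>M n) / min e 1"
      by (rule integral_Markov_inequality_measure[OF iF, where A="space (M n)"]) (use e in \<open>auto simp: F_def\<close>)
    finally show ?thesis .
  qed
  then show "(\<lambda>n. measure (M n) {\<omega>\<in>space (M n). norm (X n \<omega> 0) > e}) \<longlonglongrightarrow> 0"
    by (intro tendsto_sandwich[OF _ _ tendsto_const lim] always_eventually allI) auto
qed

section \<open>Truncations and cylinder functions\<close>

lemma abs_prod_diff_le_sum:
  fixes a b :: "nat \<Rightarrow> real"
  assumes "\<And>i. i < m \<Longrightarrow> 0 \<le> a i \<and> a i \<le> 1 \<and> 0 \<le> b i \<and> b i \<le> 1"
  shows "\<bar>(\<Prod>i<m. a i) - (\<Prod>i<m. b i)\<bar> \<le> (\<Sum>i<m. \<bar>a i - b i\<bar>)"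
  using assms
proof (induction m)
  case 0
  then show ?case by simp
next
  case (Suc m)
  let ?A = "\<Prod>i<m. a i" and ?B = "\<Prod>i<m. b i"
  have "0 \<le> ?B \<and> ?B \<le> 1" and ab: "0 \<le> a m \<and> a m \<le> 1 \<and> 0 \<le> b m \<and> b m \<le> 1"
    using Suc.prems by (auto intro!: prod_nonneg prod_le_1)
  have "?A * a m - ?B * b m = (?A - ?B) * a m + ?B * (a m - b m)" by (simp add: algebra_simps)
  then have "\<bar>?A * a m - ?B * b m\<bar> \<le> \<bar>?A - ?B\<bar> * \<bar>a m\<bar> + \<bar>?B\<bar> * \<bar>a m - b m\<bar>"
    by (metis abs_mult abs_triangle_ineq)
  also have "\<dots> \<le> \<bar>?A - ?B\<bar> * 1 + 1 * \<bar>a m - b m\<bar>"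
    using ab \<open>0 \<le> ?B \<and> ?B \<le> 1\<close> by (intro add_mono mult_left_mono mult_right_mono) auto
  finally show ?case using Suc by simp
qed

definition trunc :: "real \<Rightarrow> real \<Rightarrow> real" where
  "trunc K x = max (-K) (min K x)"

lemma abs_trunc_le: "K \<ge> 0 \<Longrightarrow> \<bar>trunc K x\<bar> \<le> K"
  by (auto simp: trunc_def)

lemma abs_trunc_le_abs: "K \<ge> 0 \<Longrightarrow> \<bar>trunc K x\<bar> \<le> \<bar>x\<bar>"
  by (auto simp: trunc_def)

lemma trunc_eq: "\<bar>x\<bar> \<le> K \<Longrightarrow> trunc K x = x"
  by (auto simp: trunc_def)

lemma abs_trunc_diff_le: "K \<ge> 0 \<Longrightarrow> \<bar>trunc K x - trunc K y\<bar> \<le> min (2*K) \<bar>x - y\<bar>"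
  by (auto simp: trunc_def)

lemma abs_trunc_minus_le: "K \<ge> 0 \<Longrightarrow> \<bar>trunc K x - x\<bar> \<le> \<bar>x\<bar> * indicator {x. \<bar>x\<bar> > K} x"
  by (auto simp: trunc_def indicator_def)

lemma tendsto_trunc[tendsto_intros]: "(f \<longlongrightarrow> l) F \<Longrightarrow> ((\<lambda>x. trunc K (f x)) \<longlongrightarrow> trunc K l) F"
  unfolding trunc_def by (intro tendsto_intros)

lemma borel_measurable_trunc[measurable]: "trunc K \<in> borel_measurable borel"
  unfolding trunc_def by measurable

lemma abs_trunc_increment_diff_le:
  fixes K G Gc S a b zt zs :: real
  assumes K: "K \<ge> 0" and G: "0 \<le> G" "G \<le> 1" and Gc: "0 \<le> Gc" "Gc \<le> 1" and S: "\<bar>G - Gc\<bar> \<le> S"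
  shows "\<bar>(trunc K a - trunc K b) * G - (zt - zs) * Gc\<bar> \<le>
     min (2*K) \<bar>a - zt\<bar> + min (2*K) \<bar>b - zs\<bar> + 2 * (\<bar>zt\<bar> * indicator {x. \<bar>x\<bar> > K} zt)
       + 2 * (\<bar>zs\<bar> * indicator {x. \<bar>x\<bar> > K} zs) + 2 * (K * S)"
proof -
  have A: "\<bar>(trunc K x - trunc K y) * G\<bar> \<le> min (2*K) \<bar>x - y\<bar>" for x y
  proof -
    have "\<bar>(trunc K x - trunc K y) * G\<bar> = \<bar>trunc K x - trunc K y\<bar> * G" using G by (simp add: abs_mult)
    also have "\<dots> \<le> min (2*K) \<bar>x - y\<bar> * 1" using abs_trunc_diff_le[OF K, of x y] G by (intro mult_mono) auto
    finally show ?thesis by simp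
  qed
  have B: "\<bar>(trunc K z - z) * G\<bar> \<le> \<bar>z\<bar> * indicator {x. \<bar>x\<bar> > K} z" for z
  proof -
    have "\<bar>(trunc K z - z) * G\<bar> = \<bar>trunc K z - z\<bar> * G" using G by (simp add: abs_mult)
    also have "\<dots> \<le> (\<bar>z\<bar> * indicator {x. \<bar>x\<bar> > K} z) * 1" using abs_trunc_minus_le[OF K, of z] G
      by (intro mult_mono) auto
    finally show ?thesis by simp
  qed
  have C: "\<bar>z * (G - Gc)\<bar> \<le> \<bar>z\<bar> * indicator {x. \<bar>x\<bar> > K} z + K * S" for z
  proof (cases "\<bar>z\<bar> > K")
    case True
    have "\<bar>z * (G - Gc)\<bar> \<le> \<bar>z\<bar> * 1" unfolding abs_mult using G Gc by (intro mult_left_mono) auto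
    moreover have "0 \<le> K * S" using K S by simp
    ultimately show ?thesis using True by simp
  next
    case False
    then have "\<bar>z * (G - Gc)\<bar> \<le> K * S" unfolding abs_mult using S K by (intro mult_mono) auto
    then show ?thesis using False by simp
  qed
  define p1 p2 p3 p4 p5 p6 where "p1 = (trunc K a - trunc K zt) * G" and "p2 = (trunc K b - trunc K zs) * G"
    and "p3 = (trunc K zt - zt) * G" and "p4 = (trunc K zs - zs) * G"
    and "p5 = zt * (G - Gc)" and "p6 = zs * (G - Gc)"
  have "\<bar>(trunc K a - trunc K b) * G - (zt - zs) * Gc\<bar> = \<bar>p1 - p2 + p3 - p4 + p5 - p6\<bar>"
    unfolding p1_def p2_def p3_def p4_def p5_def p6_def by (simp add: algebra_simps)
  also have "\<bar>p1 - p2 + p3 - p4 + p5 - p6\<bar> \<le> \<bar>p1\<bar> + \<bar>p2\<bar> + \<bar>p3\<bar> + \<bar>p4\<bar> + \<bar>p5\<bar> + \<bar>p6\<bar>"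
    by (intro order.trans[OF abs_triangle_ineq4] order.trans[OF abs_triangle_ineq] add_mono order_refl)
  also have "\<dots> \<le> min (2*K) \<bar>a - zt\<bar> + min (2*K) \<bar>b - zs\<bar> + \<bar>zt\<bar> * indicator {x. \<bar>x\<bar> > K} zt
      + \<bar>zs\<bar> * indicator {x. \<bar>x\<bar> > K} zs + (\<bar>zt\<bar> * indicator {x. \<bar>x\<bar> > K} zt + K * S)
      + (\<bar>zs\<bar> * indicator {x. \<bar>x\<bar> > K} zs + K * S)"
    unfolding p1_def p2_def p3_def p4_def p5_def p6_def by (intro add_mono A B C)
  finally show ?thesis by linarith
qed

definition cyl_prod :: "nat \<Rightarrow> (nat \<Rightarrow> real) \<Rightarrow> (nat \<Rightarrow> 'e \<Rightarrow> real) \<Rightarrow> (real \<Rightarrow> 'e) \<Rightarrow> real" where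
  "cyl_prod m us gs v = (\<Prod>i<m. gs i (v (us i)))"

lemma cyl_prod_bounds:
  assumes "\<And>i x. i < m \<Longrightarrow> 0 \<le> gs i x \<and> gs i x \<le> 1"
  shows "0 \<le> cyl_prod m us gs v \<and> cyl_prod m us gs v \<le> 1"
  using assms unfolding cyl_prod_def by (auto intro!: prod_nonneg prod_le_1)

lemma borel_measurable_cyl_prod:
  assumes "\<And>i. i < m \<Longrightarrow> gs i \<in> borel_measurable borel"
    and "\<And>i. i < m \<Longrightarrow> (\<lambda>\<omega>. f \<omega> (us i)) \<in> borel_measurable A"
  shows "(\<lambda>\<omega>. cyl_prod m us gs (f \<omega>)) \<in> borel_measurable A"
  unfolding cyl_prod_def
proof (rule borel_measurable_prod)
  fix i assume "i \<in> {..<m}"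
  then have "gs i \<in> borel_measurable borel" using assms(1) by auto
  then show "(\<lambda>\<omega>. gs i (f \<omega> (us i))) \<in> borel_measurable A"
    using \<open>i \<in> {..<m}\<close> by (intro measurable_compose[OF assms(2)]) auto
qed

definition approx_indicator :: "nat \<Rightarrow> 'e::metric_space set \<Rightarrow> 'e \<Rightarrow> real" where
  "approx_indicator j U x = (if U = UNIV then 1 else min 1 (real j * infdist x (- U)))"

lemma approx_indicator_bounds: "0 \<le> approx_indicator j U x \<and> approx_indicator j U x \<le> 1"
  by (auto simp: approx_indicator_def infdist_nonneg)

lemma approx_indicator_lipschitz:
  "\<bar>approx_indicator j U x - approx_indicator j U y\<bar> \<le> real j * dist x y"
proof (cases "U = UNIV")
  case False
  have "\<bar>min 1 (real j * infdist x (- U)) - min 1 (real j * infdist y (- U))\<bar> \<le>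
        \<bar>real j * infdist x (- U) - real j * infdist y (- U)\<bar>"
    by (auto simp: min_def)
  also have "\<dots> = real j * \<bar>infdist x (- U) - infdist y (- U)\<bar>"
    by (simp add: abs_mult right_diff_distrib[symmetric])
  also have "\<dots> \<le> real j * dist x y" by (intro mult_left_mono infdist_triangle_abs) auto
  finally show ?thesis using False by (simp add: approx_indicator_def)
qed (simp add: approx_indicator_def)

lemma continuous_on_approx_indicator: "continuous_on UNIV (approx_indicator j U)"
  unfolding approx_indicator_def[abs_def] by (cases "U = UNIV") (simp_all add: continuous_intros)

lemma approx_indicator_tendsto:
  assumes "open U"
  shows "(\<lambda>j. approx_indicator j U x) \<longlonglongrightarrow> indicator U x"
proof (cases "U = UNIV \<or> x \<notin> U")
  case True
  then show ?thesis by (cases "U = UNIV") (auto simp: approx_indicator_def)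
next
  case False
  then have "infdist x (- U) > 0"
    using assms by (intro infdist_pos_not_in_closed) auto
  then obtain j0 :: nat where j0: "1 / infdist x (- U) \<le> real j0" using real_arch_simple by blast
  have "1 \<le> real j * infdist x (- U)" if "j \<ge> j0" for j
  proof -
    have "1 / infdist x (- U) \<le> real j" using j0 that by (meson of_nat_le_iff order.trans)
    then show ?thesis using \<open>infdist x (- U) > 0\<close> by (simp add: field_simps)
  qed
  then have "\<forall>\<^sub>F j in sequentially. approx_indicator j U x = 1"
    using False unfolding eventually_sequentially approx_indicator_def by (intro exI[of _ j0]) auto
  then show ?thesis using False by (simp add: tendsto_eventually)
qed

section \<open>Martingales and natural filtrations\<close>

lemma integral_mult_eq_0_if_orthogonal_to_sigma:
  fixes Z g :: "'a \<Rightarrow> real"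
  assumes P: "prob_space M" and Gs: "Gs \<subseteq> sets M" and Z: "integrable M Z"
    and orth: "\<And>A. A \<in> sigma_sets (space M) Gs \<Longrightarrow> (\<integral>\<omega>. indicator A \<omega> * Z \<omega> \<partial>M) = 0"
    and g: "g \<in> borel_measurable (sigma (space M) Gs)"
    and g_bound: "\<And>\<omega>. \<omega> \<in> space M \<Longrightarrow> \<bar>g \<omega>\<bar> \<le> B"
  shows "(\<integral>\<omega>. g \<omega> * Z \<omega> \<partial>M) = 0"
proof -
  interpret prob_space M by (rule P)
  let ?F = "sigma (space M) Gs"
  have GsP: "Gs \<subseteq> Pow (space M)" using Gs sets.sets_into_space by auto
  have sub: "subalgebra M ?F"
    unfolding subalgebra_def using GsP sets.sigma_sets_subset[OF Gs]
    by (auto simp: sets_measure_of space_measure_of_conv)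
  interpret finite_measure_subalgebra M ?F
    by unfold_locales (rule sub)
  have [measurable]: "Z \<in> borel_measurable M" "g \<in> borel_measurable M"
    using Z measurable_from_subalg[OF sub g] by auto
  have ce: "AE \<omega> in M. real_cond_exp M ?F Z \<omega> = 0"
  proof (rule real_cond_exp_charact)
    fix A assume "A \<in> sets ?F"
    then show "(\<integral>\<omega>\<in>A. Z \<omega> \<partial>M) = (\<integral>\<omega>\<in>A. 0 \<partial>M)"
      using orth GsP by (simp add: sets_measure_of set_lebesgue_integral_def)
  qed (use Z in auto)
  have "integrable M (\<lambda>\<omega>. g \<omega> * Z \<omega>)"
  proof (rule Bochner_Integration.integrable_bound[where f="\<lambda>\<omega>. B * Z \<omega>"])
    have "\<bar>g \<omega>\<bar> * \<bar>Z \<omega>\<bar> \<le> \<bar>B\<bar> * \<bar>Z \<omega>\<bar>" if "\<omega> \<in> space M" for \<omega>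
      using g_bound[OF that] by (intro mult_right_mono) auto
    then show "AE \<omega> in M. norm (g \<omega> * Z \<omega>) \<le> norm (B * Z \<omega>)"
      by (intro AE_I2) (simp add: abs_mult)
  qed (use Z in auto)
  then have "(\<integral>\<omega>. g \<omega> * Z \<omega> \<partial>M) = (\<integral>\<omega>. g \<omega> * real_cond_exp M ?F Z \<omega> \<partial>M)"
    using g by (intro real_cond_exp_intg(2)[symmetric]) auto
  also have "\<dots> = (\<integral>\<omega>. 0 \<partial>M)"
    by (rule integral_cong_AE) (use ce in auto)
  finally show ?thesis by simp
qed

lemma nat_filt_subset_sets:
  assumes "\<And>t. (\<lambda>\<omega>. V \<omega> t) \<in> borel_measurable M"
  shows "nat_filt M V s \<subseteq> sets M"
  unfolding nat_filt_def using assms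
  by (intro sets.sigma_sets_subset) (auto intro!: measurable_sets[of _ _ borel] simp del: vimage_Int)

lemma nat_filt_adapted:
  assumes "\<phi> \<in> borel_measurable borel" "t \<ge> 0" "A \<in> sets borel"
  shows "(\<lambda>\<omega>. \<phi> (V \<omega> t)) -` A \<inter> space M \<in> nat_filt M V t"
proof -
  have "\<phi> -` A \<in> sets borel" using measurable_sets[OF assms(1,3)] by simp
  then have "(\<lambda>\<omega>. V \<omega> t) -` (\<phi> -` A) \<inter> space M \<in> {(\<lambda>\<omega>. V \<omega> t) -` B \<inter> space M | B. B \<in> sets borel}"
    by blast
  moreover have "(\<lambda>\<omega>. V \<omega> t) -` (\<phi> -` A) = (\<lambda>\<omega>. \<phi> (V \<omega> t)) -` A" by auto
  ultimately show ?thesis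
    unfolding nat_filt_def using assms(2) by (intro sigma_sets.Basic UN_I[of t]) auto
qed

lemma set_integral_inner_left:
  fixes f :: "'a \<Rightarrow> 'e::euclidean_space"
  assumes "integrable M f" "A \<in> sets M"
  shows "(LINT x:A|M. f x \<bullet> b) = (LINT x:A|M. f x) \<bullet> b"
  using integral_inner_left[OF integrable_mult_indicator[OF assms(2,1)], of b]
  by (simp add: set_lebesgue_integral_def)

lemma set_integral_diff_eq_integral_indicator:
  fixes f g :: "'a \<Rightarrow> real"
  assumes f: "integrable M f" and g: "integrable M g" and A: "A \<in> sets M"
  shows "(LINT x:A|M. f x) - (LINT x:A|M. g x) = (\<integral>x. indicator A x * (f x - g x) \<partial>M)"
proof -
  have "integrable M (\<lambda>x. indicator A x * h x)" if "integrable M h" for h :: "'a \<Rightarrow> real"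
    using integrable_real_mult_indicator[OF A that] by (simp add: mult.commute)
  then have "(\<integral>x. indicator A x * f x - indicator A x * g x \<partial>M)
      = (\<integral>x. indicator A x * f x \<partial>M) - (\<integral>x. indicator A x * g x \<partial>M)"
    using f g by (intro Bochner_Integration.integral_diff)
  then show ?thesis by (simp add: set_lebesgue_integral_def right_diff_distrib)
qed

lemma martingale_increment_orthogonal:
  fixes Z :: "'a \<Rightarrow> real \<Rightarrow> real"
  assumes Z: "martingale M F Z" and F: "\<And>s. F s \<subseteq> sets M"
    and st: "0 \<le> s" "s \<le> t" and A: "A \<in> F s"
  shows "(\<integral>\<omega>. indicator A \<omega> * (Z \<omega> t - Z \<omega> s) \<partial>M) = 0"
proof -
  have "t \<ge> 0" using st by linarith
  then have "integrable M (\<lambda>\<omega>. Z \<omega> t)" "integrable M (\<lambda>\<omega>. Z \<omega> s)"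
    and "(LINT \<omega>:A|M. Z \<omega> t) = (LINT \<omega>:A|M. Z \<omega> s)"
    using Z st A unfolding martingale_def by blast+
  then show ?thesis
    using set_integral_diff_eq_integral_indicator[of M "\<lambda>\<omega>. Z \<omega> t" "\<lambda>\<omega>. Z \<omega> s" A] A F[of s] by auto
qed

lemma martingaleI_orthogonal:
  fixes Z :: "'a \<Rightarrow> real \<Rightarrow> real"
  assumes adapted: "\<And>t A. t \<ge> 0 \<Longrightarrow> A \<in> sets borel \<Longrightarrow> (\<lambda>\<omega>. Z \<omega> t) -` A \<inter> space M \<in> F t"
    and F: "\<And>s. F s \<subseteq> sets M" and int: "\<And>t. t \<ge> 0 \<Longrightarrow> integrable M (\<lambda>\<omega>. Z \<omega> t)"
    and orth: "\<And>s t A. 0 \<le> s \<Longrightarrow> s \<le> t \<Longrightarrow> A \<in> F s \<Longrightarrow> (\<integral>\<omega>. indicator A \<omega> * (Z \<omega> t - Z \<omega> s) \<partial>M) = 0"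
  shows "martingale M F Z"
  unfolding martingale_def
proof (intro conjI allI impI ballI)
  fix s t A assume "0 \<le> s \<and> s \<le> t \<and> A \<in> F s"
  moreover from this have "integrable M (\<lambda>\<omega>. Z \<omega> t)" "integrable M (\<lambda>\<omega>. Z \<omega> s)" "A \<in> sets M"
    using int[of s] int[of t] F[of s] by auto
  ultimately show "(LINT \<omega>:A|M. Z \<omega> t) = (LINT \<omega>:A|M. Z \<omega> s)"
    using orth set_integral_diff_eq_integral_indicator[of M "\<lambda>\<omega>. Z \<omega> t" "\<lambda>\<omega>. Z \<omega> s" A] by simp
qed (use adapted int in auto)

lemma martingale_inner:
  fixes Z :: "'a \<Rightarrow> real \<Rightarrow> 'e::euclidean_space"
  assumes Z: "martingale M F Z" and F: "\<And>s. F s \<subseteq> sets M"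
  shows "martingale M F (\<lambda>\<omega> t. Z \<omega> t \<bullet> b)"
  unfolding martingale_def
proof (intro conjI allI impI ballI)
  fix t :: real and A :: "real set" assume "t \<ge> 0" "A \<in> sets borel"
  moreover have "(\<lambda>x. x \<bullet> b) \<in> borel_measurable borel"
    by (intro borel_measurable_continuous_onI continuous_intros)
  then have "(\<lambda>x. x \<bullet> b) -` A \<in> sets borel"
    using measurable_sets[OF _ \<open>A \<in> sets borel\<close>] by (metis space_borel inf_top.right_neutral)
  ultimately have "(\<lambda>\<omega>. Z \<omega> t) -` ((\<lambda>x. x \<bullet> b) -` A) \<inter> space M \<in> F t"
    using Z unfolding martingale_def by blast
  then show "(\<lambda>\<omega>. Z \<omega> t \<bullet> b) -` A \<inter> space M \<in> F t"
    by (simp add: vimage_def)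
next
  fix s t A assume "0 \<le> s \<and> s \<le> t \<and> A \<in> F s"
  with Z F show "(LINT \<omega>:A|M. Z \<omega> t \<bullet> b) = (LINT \<omega>:A|M. Z \<omega> s \<bullet> b)"
    unfolding martingale_def by (subst (1 2) set_integral_inner_left) auto
qed (use Z in \<open>auto simp: martingale_def\<close>)

lemma martingale_BasisI:
  fixes Z :: "'a \<Rightarrow> real \<Rightarrow> 'e::euclidean_space"
  assumes adapted: "\<And>t A. t \<ge> 0 \<Longrightarrow> A \<in> sets borel \<Longrightarrow> (\<lambda>\<omega>. Z \<omega> t) -` A \<inter> space M \<in> F t"
    and F: "\<And>s. F s \<subseteq> sets M"
    and Z: "\<And>b. b \<in> Basis \<Longrightarrow> martingale M F (\<lambda>\<omega> t. Z \<omega> t \<bullet> b)"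
  shows "martingale M F Z"
proof -
  have int: "integrable M (\<lambda>\<omega>. Z \<omega> t)" if "t \<ge> 0" for t
  proof -
    have "integrable M (\<lambda>\<omega>. \<Sum>b\<in>Basis. (Z \<omega> t \<bullet> b) *\<^sub>R b)"
      using Z that unfolding martingale_def by (intro Bochner_Integration.integrable_sum integrable_scaleR_left) auto
    then show ?thesis by (simp add: euclidean_representation)
  qed
  show ?thesis
    unfolding martingale_def
  proof (intro conjI allI impI ballI)
    fix s t A assume h: "0 \<le> s \<and> s \<le> t \<and> A \<in> F s"
    show "(LINT \<omega>:A|M. Z \<omega> t) = (LINT \<omega>:A|M. Z \<omega> s)"
    proof (rule euclidean_eqI)
      fix b :: 'e assume "b \<in> Basis"
      then show "(LINT \<omega>:A|M. Z \<omega> t) \<bullet> b = (LINT \<omega>:A|M. Z \<omega> s) \<bullet> b"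
        using Z[of b] h F[of s] int[of s] int[of t] unfolding martingale_def
        by (subst (1 2) set_integral_inner_left[symmetric]) auto
    qed
  qed (use adapted int in auto)
qed

lemma integrable_if_truncated_integrals_bounded:
  fixes f :: "'a \<Rightarrow> real"
  assumes "finite_measure M" and f: "f \<in> borel_measurable M"
    and bnd: "\<And>K. K \<ge> 0 \<Longrightarrow> (\<integral>\<omega>. min K \<bar>f \<omega>\<bar> \<partial>M) \<le> C"
  shows "integrable M f"
proof (rule integrableI_bounded)
  interpret finite_measure M by fact
  have "(\<lambda>\<omega>. ennreal (norm (f \<omega>))) = (\<lambda>\<omega>. SUP K::nat. ennreal (min (real K) \<bar>f \<omega>\<bar>))"
  proof
    fix \<omega>
    obtain K0 :: nat where "\<bar>f \<omega>\<bar> \<le> real K0" using real_arch_simple by blast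
    then have "\<forall>\<^sub>F K in sequentially. min (real K) \<bar>f \<omega>\<bar> = \<bar>f \<omega>\<bar>"
      unfolding eventually_sequentially by (intro exI[of _ K0]) (auto simp: min_def)
    then have "(\<lambda>K. ennreal (min (real K) \<bar>f \<omega>\<bar>)) \<longlonglongrightarrow> ennreal \<bar>f \<omega>\<bar>"
      by (intro tendsto_ennrealI) (rule tendsto_eventually)
    moreover have "incseq (\<lambda>K::nat. ennreal (min (real K) \<bar>f \<omega>\<bar>))"
      by (intro incseq_SucI ennreal_leI) linarith
    ultimately show "ennreal (norm (f \<omega>)) = (SUP K::nat. ennreal (min (real K) \<bar>f \<omega>\<bar>))"
      using LIMSEQ_unique[OF _ LIMSEQ_SUP] by fastforce
  qed
  then have "(\<integral>\<^sup>+\<omega>. ennreal (norm (f \<omega>)) \<partial>M) = (SUP K::nat. \<integral>\<^sup>+\<omega>. ennreal (min (real K) \<bar>f \<omega>\<bar>) \<partial>M)"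
    using f by (simp only:) (rule nn_integral_monotone_convergence_SUP, auto simp: incseq_def le_fun_def intro!: ennreal_leI)
  also have "\<dots> \<le> ennreal C"
  proof (rule SUP_least)
    fix K :: nat
    have "(\<integral>\<^sup>+\<omega>. ennreal (min (real K) \<bar>f \<omega>\<bar>) \<partial>M) = ennreal (\<integral>\<omega>. min (real K) \<bar>f \<omega>\<bar> \<partial>M)"
      using f by (intro nn_integral_eq_integral integrable_const_bound[where B="real K"]) auto
    then show "(\<integral>\<^sup>+\<omega>. ennreal (min (real K) \<bar>f \<omega>\<bar>) \<partial>M) \<le> ennreal C"
      using bnd[of "real K"] by (auto intro: ennreal_leI)
  qed
  finally show "(\<integral>\<^sup>+\<omega>. ennreal (norm (f \<omega>)) \<partial>M) < \<infinity>"
    using ennreal_less_top le_less_trans by fastforce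
qed (rule f)

lemma unif_integrable_subseq_le:
  assumes Z: "unif_integrable M Z" and le: "\<And>n \<omega>. norm (Z' n \<omega>) \<le> norm (Z (r n) \<omega>)"
  shows "unif_integrable (\<lambda>n. M (r n)) Z'"
  unfolding unif_integrable_def
proof (rule tendsto_sandwich[OF _ _ tendsto_const Z[unfolded unif_integrable_def]])
  show "\<forall>\<^sub>F K in at_top. (\<Squnion>n. \<integral>\<^sup>+\<omega>. ennreal (norm (Z' n \<omega>)) * indicator {\<omega>. norm (Z' n \<omega>) > K} \<omega> \<partial>M (r n))
      \<le> (\<Squnion>n. \<integral>\<^sup>+\<omega>. ennreal (norm (Z n \<omega>)) * indicator {\<omega>. norm (Z n \<omega>) > K} \<omega> \<partial>M n)"
  proof (intro always_eventually allI SUP_least)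
    fix K :: real and n
    have "(\<integral>\<^sup>+\<omega>. ennreal (norm (Z' n \<omega>)) * indicator {\<omega>. norm (Z' n \<omega>) > K} \<omega> \<partial>M (r n))
        \<le> (\<integral>\<^sup>+\<omega>. ennreal (norm (Z (r n) \<omega>)) * indicator {\<omega>. norm (Z (r n) \<omega>) > K} \<omega> \<partial>M (r n))"
      using le[of n] by (intro nn_integral_mono) (auto simp: indicator_def intro: ennreal_leI order.strict_trans2)
    also have "\<dots> \<le> (\<Squnion>n. \<integral>\<^sup>+\<omega>. ennreal (norm (Z n \<omega>)) * indicator {\<omega>. norm (Z n \<omega>) > K} \<omega> \<partial>M n)"
      by (rule SUP_upper) simp
    finally show "(\<integral>\<^sup>+\<omega>. ennreal (norm (Z' n \<omega>)) * indicator {\<omega>. norm (Z' n \<omega>) > K} \<omega> \<partial>M (r n))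
        \<le> (\<Squnion>n. \<integral>\<^sup>+\<omega>. ennreal (norm (Z n \<omega>)) * indicator {\<omega>. norm (Z n \<omega>) > K} \<omega> \<partial>M n)" .
  qed
qed simp

lemma borel_measurable_sigma_nat_filt:
  fixes V :: "'a \<Rightarrow> real \<Rightarrow> 'e::topological_space"
  assumes "0 \<le> u" "u \<le> s"
  shows "(\<lambda>\<omega>. V \<omega> u) \<in> borel_measurable
           (sigma (space M) (\<Union>r\<in>{0..s}. {(\<lambda>\<omega>. V \<omega> r) -` A \<inter> space M | A. A \<in> sets borel}))"
    (is "_ \<in> borel_measurable (sigma _ ?G)")
proof (rule measurableI)
  have "?G \<subseteq> Pow (space M)" by blast
  fix A :: "'e set" assume "A \<in> sets borel"
  then have "(\<lambda>\<omega>. V \<omega> u) -` A \<inter> space M \<in> ?G"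
    using assms by (intro UN_I[of u]) auto
  moreover have "space (sigma (space M) ?G) = space M" by (simp add: space_measure_of_conv)
  moreover have "sets (sigma (space M) ?G) = sigma_sets (space M) ?G"
    using \<open>?G \<subseteq> Pow (space M)\<close> by (rule sets_measure_of)
  ultimately show "(\<lambda>\<omega>. V \<omega> u) -` A \<inter> space (sigma (space M) ?G) \<in> sets (sigma (space M) ?G)"
    by (simp add: sigma_sets.Basic)
qed simp

lemma integral_indicator_eq_0_sigma_sets:
  fixes D :: "'a \<Rightarrow> real"
  assumes D: "integrable M D" and G: "Int_stable G" "G \<subseteq> sets M" and space: "space M \<in> G"
    and orth: "\<And>B. B \<in> G \<Longrightarrow> (\<integral>\<omega>. indicator B \<omega> * D \<omega> \<partial>M) = 0"
    and A: "A \<in> sigma_sets (space M) G"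
  shows "(\<integral>\<omega>. indicator A \<omega> * D \<omega> \<partial>M) = 0"
proof -
  have GP: "G \<subseteq> Pow (space M)" using G(2) sets.sets_into_space by auto
  have sG: "sigma_sets (space M) G \<subseteq> sets M" by (rule sets.sigma_sets_subset[OF G(2)])
  have int_D: "(\<integral>\<omega>. D \<omega> \<partial>M) = 0"
    using orth[OF space] by (subst (asm) Bochner_Integration.integral_cong[where g=D]) auto
  show ?thesis
    using G(1) GP A
  proof (induct rule: sigma_sets_induct_disjoint)
    case (compl B)
    then have B: "B \<in> sets M" using sG by blast
    have "(\<integral>\<omega>. indicator (space M - B) \<omega> * D \<omega> \<partial>M) = (\<integral>\<omega>. D \<omega> - indicator B \<omega> * D \<omega> \<partial>M)"
      by (rule Bochner_Integration.integral_cong) (auto simp: indicator_def)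
    also have "\<dots> = (\<integral>\<omega>. D \<omega> \<partial>M) - (\<integral>\<omega>. indicator B \<omega> * D \<omega> \<partial>M)"
      using D B by (intro Bochner_Integration.integral_diff) (auto intro: integrable_real_mult_indicator simp: mult.commute)
    finally show ?case using int_D compl(2) by simp
  next
    case (union B)
    then have B: "\<And>i. B i \<in> sets M" using sG by blast
    have "(\<integral>\<omega>. indicator (\<Union>i. B i) \<omega> * D \<omega> \<partial>M) = (LINT \<omega>:(\<Union>i. B i)|M. D \<omega>)"
      by (simp add: set_lebesgue_integral_def)
    also have "\<dots> = (\<Sum>i. (LINT \<omega>:(B i)|M. D \<omega>))"
    proof (rule lebesgue_integral_countable_add[OF B])
      show "\<And>i j. i \<noteq> j \<Longrightarrow> B i \<inter> B j = {}" using union(1) unfolding disjoint_family_on_def by auto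
      show "set_integrable M (\<Union>i. B i) D"
        unfolding set_integrable_def using B D by (intro integrable_mult_indicator) auto
    qed
    also have "\<dots> = 0" using union(3) by (simp add: set_lebesgue_integral_def)
    finally show ?case .
  qed (use orth in auto)
qed

definition open_cylinder_sets :: "'b measure \<Rightarrow> ('b \<Rightarrow> real \<Rightarrow> 'e::topological_space) \<Rightarrow> real \<Rightarrow> 'b set set" where
  "open_cylinder_sets N V s = {space N \<inter> (\<Inter>i<m. (\<lambda>\<omega>. V \<omega> (us i)) -` Os i) |
     (m::nat) (us::nat \<Rightarrow> real) (Os::nat \<Rightarrow> 'e set). \<forall>i<m. 0 \<le> us i \<and> us i \<le> s \<and> open (Os i)}"

lemma open_cylinder_setsE:
  fixes V :: "'b \<Rightarrow> real \<Rightarrow> 'e::topological_space"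
  assumes "B \<in> open_cylinder_sets N V s"
  obtains m :: nat and us :: "nat \<Rightarrow> real" and Os :: "nat \<Rightarrow> 'e set"
  where "B = space N \<inter> (\<Inter>i<m. (\<lambda>\<omega>. V \<omega> (us i)) -` Os i)"
    and "\<And>i. i < m \<Longrightarrow> 0 \<le> us i \<and> us i \<le> s \<and> open (Os i)"
proof -
  from assms have "\<exists>(m::nat) (us::nat \<Rightarrow> real) (Os::nat \<Rightarrow> 'e set). B = space N \<inter> (\<Inter>i<m. (\<lambda>\<omega>. V \<omega> (us i)) -` Os i) \<and>
      (\<forall>i<m. 0 \<le> us i \<and> us i \<le> s \<and> open (Os i))"
    unfolding open_cylinder_sets_def by (simp only: mem_Collect_eq)
  then show ?thesis using that by blast
qed

lemma open_cylinder_setsI: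
  fixes V :: "'b \<Rightarrow> real \<Rightarrow> 'e::topological_space" and m :: nat
  assumes "\<And>i. i < m \<Longrightarrow> 0 \<le> us i \<and> us i \<le> s \<and> open (Os i)"
  shows "space N \<inter> (\<Inter>i<m. (\<lambda>\<omega>. V \<omega> (us i)) -` Os i) \<in> open_cylinder_sets N V s"
  unfolding open_cylinder_sets_def mem_Collect_eq
  using assms by (intro exI[of _ m] exI[of _ us] exI[of _ Os]) simp

lemma space_in_open_cylinder_sets: "space N \<in> open_cylinder_sets N V s"
  using open_cylinder_setsI[of 0] by simp

lemma open_cylinder_sets_subset_sets:
  fixes V :: "'b \<Rightarrow> real \<Rightarrow> 'e::topological_space"
  assumes meas: "\<And>t. (\<lambda>\<omega>. V \<omega> t) \<in> borel_measurable N"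
  shows "open_cylinder_sets N V s \<subseteq> sets N"
proof
  fix B assume "B \<in> open_cylinder_sets N V s"
  then obtain m :: nat and us Os where B: "B = space N \<inter> (\<Inter>i<m. (\<lambda>\<omega>. V \<omega> (us i)) -` Os i)"
    and O: "\<And>i. i < m \<Longrightarrow> open (Os i)" by (rule open_cylinder_setsE) blast
  have "B = {\<omega>\<in>space N. \<forall>i\<in>{..<m}. V \<omega> (us i) \<in> Os i}" unfolding B by auto
  also have "\<dots> \<in> sets N"
  proof (rule sets.sets_Collect_finite_All)
    fix i assume "i \<in> {..<m}"
    then have "(\<lambda>\<omega>. V \<omega> (us i)) -` Os i \<inter> space N \<in> sets N"
      using O by (intro measurable_sets[OF meas]) auto
    moreover have "{\<omega>\<in>space N. V \<omega> (us i) \<in> Os i} = (\<lambda>\<omega>. V \<omega> (us i)) -` Os i \<inter> space N" by auto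
    ultimately show "{\<omega>\<in>space N. V \<omega> (us i) \<in> Os i} \<in> sets N" by simp
  qed simp
  finally show "B \<in> sets N" .
qed

lemma Int_stable_open_cylinder_sets:
  fixes V :: "'b \<Rightarrow> real \<Rightarrow> 'e::topological_space"
  shows "Int_stable (open_cylinder_sets N V s)"
  unfolding Int_stable_def
proof (intro ballI)
  fix a b assume a: "a \<in> open_cylinder_sets N V s" and b: "b \<in> open_cylinder_sets N V s"
  obtain m1 :: nat and us1 :: "nat \<Rightarrow> real" and Os1 :: "nat \<Rightarrow> 'e set" where a: "a = space N \<inter> (\<Inter>i<m1. (\<lambda>\<omega>. V \<omega> (us1 i)) -` Os1 i)"
    and O1: "\<And>i. i < m1 \<Longrightarrow> 0 \<le> us1 i \<and> us1 i \<le> s \<and> open (Os1 i)"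
    using a by (rule open_cylinder_setsE) blast
  obtain m2 :: nat and us2 :: "nat \<Rightarrow> real" and Os2 :: "nat \<Rightarrow> 'e set" where b: "b = space N \<inter> (\<Inter>i<m2. (\<lambda>\<omega>. V \<omega> (us2 i)) -` Os2 i)"
    and O2: "\<And>i. i < m2 \<Longrightarrow> 0 \<le> us2 i \<and> us2 i \<le> s \<and> open (Os2 i)"
    using b by (rule open_cylinder_setsE) blast
  define us where "us i = (if i < m1 then us1 i else us2 (i - m1))" for i
  define Os where "Os i = (if i < m1 then Os1 i else Os2 (i - m1))" for i
  have split: "(\<Inter>i<m1+m2. A i) = (\<Inter>i<m1. A i) \<inter> (\<Inter>i<m2. A (i + m1))" for A :: "nat \<Rightarrow> 'b set"
  proof (intro equalityI subsetI)
    fix x assume x: "x \<in> (\<Inter>i<m1. A i) \<inter> (\<Inter>i<m2. A (i + m1))"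
    show "x \<in> (\<Inter>i<m1+m2. A i)"
    proof
      fix i assume "i \<in> {..<m1+m2}"
      then show "x \<in> A i"
        using x by (cases "i < m1") (auto dest!: bspec[of _ _ "i - m1"])
    qed
  qed auto
  have "a \<inter> b = space N \<inter> (\<Inter>i<m1+m2. (\<lambda>\<omega>. V \<omega> (us i)) -` Os i)"
    unfolding a b split us_def Os_def by auto
  moreover have "0 \<le> us i \<and> us i \<le> s \<and> open (Os i)" if "i < m1 + m2" for i
    using O1[of i] O2[of "i - m1"] that unfolding us_def Os_def by auto
  ultimately show "a \<inter> b \<in> open_cylinder_sets N V s"
    by (simp add: open_cylinder_setsI)
qed

lemma nat_filt_subset_sigma_open_cylinder_sets:
  fixes V :: "'b \<Rightarrow> real \<Rightarrow> 'e::topological_space"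
  shows "nat_filt N V s \<subseteq> sigma_sets (space N) (open_cylinder_sets N V s)"
  unfolding nat_filt_def
proof (rule sigma_sets_mono, safe)
  fix u :: real and B :: "'e set" assume u: "u \<in> {0..s}" and B: "B \<in> sets borel"
  let ?G = "open_cylinder_sets N V s"
  have GP: "?G \<subseteq> Pow (space N)" by (auto elim!: open_cylinder_setsE)
  have "(\<lambda>\<omega>. V \<omega> u) \<in> measurable (sigma (space N) ?G) (sigma UNIV {S. open S})"
  proof (rule measurable_measure_of)
    fix S :: "'e set" assume "S \<in> {S. open S}"
    then have "space N \<inter> (\<lambda>\<omega>. V \<omega> u) -` S \<in> ?G"
      using u open_cylinder_setsI[of 1 "\<lambda>_. u" s "\<lambda>_. S" N V] by (simp add: lessThan_Suc)
    moreover have "sets (sigma (space N) ?G) = sigma_sets (space N) ?G"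
      using GP by (rule sets_measure_of)
    ultimately show "(\<lambda>\<omega>. V \<omega> u) -` S \<inter> space (sigma (space N) ?G) \<in> sets (sigma (space N) ?G)"
      by (simp add: space_measure_of_conv Int_commute sigma_sets.Basic)
  qed auto
  from measurable_sets[OF this[folded borel_def] B]
  show "(\<lambda>\<omega>. V \<omega> u) -` B \<inter> space N \<in> sigma_sets (space N) ?G"
    using GP by (simp add: sets_measure_of space_measure_of_conv)
qed

section \<open>Weak limits of martingales\<close>

text \<open>In the application \<open>V n\<close> and \<open>Vc n\<close> are \<open>(W, X, Y)\<close> and \<open>(W\<^sup>c, X\<^sup>c, Y\<^sup>c)\<close> along
  the subsequence, \<open>\<pi>\<close> is a coordinate of the \<open>X\<close>-component and \<open>Z n\<close> the same coordinate
  of \<open>X\<^sup>c(t) - X\<^sup>c(0)\<close>.\<close>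

locale weak_limit_martingale =
  fixes M :: "nat \<Rightarrow> 'a measure" and V Vc :: "nat \<Rightarrow> 'a \<Rightarrow> real \<Rightarrow> 'e::{metric_space,second_countable_topology}"
    and N :: "'b measure" and V' :: "'b \<Rightarrow> real \<Rightarrow> 'e" and \<pi> :: "'e \<Rightarrow> real"
    and Z :: "nat \<Rightarrow> 'a \<Rightarrow> real \<Rightarrow> real"
  assumes prob_M: "\<And>n. prob_space (M n)" and prob_N: "prob_space N"
    and V_meas: "\<And>n t. (\<lambda>\<omega>. V n \<omega> t) \<in> borel_measurable (M n)"
    and Vc_meas: "\<And>n t. (\<lambda>\<omega>. Vc n \<omega> t) \<in> borel_measurable (M n)"
    and V'_meas: "\<And>t. (\<lambda>\<omega>. V' \<omega> t) \<in> borel_measurable N"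
    and V_conv_dist: "conv_dist M V N V'"
    and \<pi>_cont: "continuous_on UNIV \<pi>"
    and Z_close: "\<And>t. t \<ge> 0 \<Longrightarrow> vanishes_in_prob M (\<lambda>n \<omega>. \<bar>\<pi> (V n \<omega> t) - Z n \<omega> t\<bar>)"
    and Vc_close: "\<And>t. t \<ge> 0 \<Longrightarrow> vanishes_in_prob M (\<lambda>n \<omega>. dist (V n \<omega> t) (Vc n \<omega> t))"
    and Z_unif_integrable: "\<And>t. t \<ge> 0 \<Longrightarrow> unif_integrable M (\<lambda>n \<omega>. Z n \<omega> t)"
    and Z_martingale: "\<And>n. martingale (M n) (nat_filt (M n) (Vc n)) (Z n)"
begin

lemma Z_integrable: "t \<ge> 0 \<Longrightarrow> integrable (M n) (\<lambda>\<omega>. Z n \<omega> t)"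
  using Z_martingale[of n] unfolding martingale_def by auto

lemma Z_meas: "t \<ge> 0 \<Longrightarrow> (\<lambda>\<omega>. Z n \<omega> t) \<in> borel_measurable (M n)"
  using Z_integrable by (rule borel_measurable_integrable)

lemma Z_increment_orthogonal:
  "0 \<le> s \<Longrightarrow> s \<le> t \<Longrightarrow> A \<in> nat_filt (M n) (Vc n) s \<Longrightarrow>
    (\<integral>\<omega>. indicator A \<omega> * (Z n \<omega> t - Z n \<omega> s) \<partial>M n) = 0"
  by (rule martingale_increment_orthogonal[OF Z_martingale nat_filt_subset_sets[OF Vc_meas]])

lemma borel_measurable_\<pi>[measurable]: "\<pi> \<in> borel_measurable borel"
  using \<pi>_cont by (rule borel_measurable_continuous_onI)

lemma tendsto_\<pi>: "(f \<longlongrightarrow> l) F \<Longrightarrow> ((\<lambda>x. \<pi> (f x)) \<longlongrightarrow> \<pi> l) F"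
  using \<pi>_cont by (intro isCont_tendsto_compose[of l \<pi>]) (simp add: continuous_on_eq_continuous_at)

lemma integral_tendsto: "bc_functional F \<Longrightarrow> (\<lambda>n. \<integral>\<omega>. F (V n \<omega>) \<partial>M n) \<longlonglongrightarrow> (\<integral>\<omega>. F (V' \<omega>) \<partial>N)"
  using V_conv_dist unfolding conv_dist_def by auto

lemma uniform_tail_bound:
  assumes t: "t \<ge> 0" and e: "e > 0"
  shows "\<exists>K0. \<forall>K\<ge>K0. \<forall>n. (\<integral>\<omega>. \<bar>Z n \<omega> t\<bar> * indicator {x. \<bar>x\<bar> > K} (Z n \<omega> t) \<partial>M n) \<le> e"
proof -
  have "\<forall>\<^sub>F K in at_top. (\<Squnion>n. \<integral>\<^sup>+\<omega>. ennreal \<bar>Z n \<omega> t\<bar> * indicator {\<omega>. \<bar>Z n \<omega> t\<bar> > K} \<omega> \<partial>M n) < ennreal e"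
    using order_tendstoD(2)[OF Z_unif_integrable[OF t, unfolded unif_integrable_def real_norm_def]] e by auto
  then obtain K0 where K0: "\<And>K. K \<ge> K0 \<Longrightarrow>
      (\<Squnion>n. \<integral>\<^sup>+\<omega>. ennreal \<bar>Z n \<omega> t\<bar> * indicator {\<omega>. \<bar>Z n \<omega> t\<bar> > K} \<omega> \<partial>M n) < ennreal e"
    by (auto simp: eventually_at_top_linorder)
  have "(\<integral>\<omega>. \<bar>Z n \<omega> t\<bar> * indicator {x. \<bar>x\<bar> > K} (Z n \<omega> t) \<partial>M n) \<le> e" if "K \<ge> K0" for K n
  proof -
    have "(\<integral>\<^sup>+\<omega>. ennreal \<bar>Z n \<omega> t\<bar> * indicator {\<omega>. \<bar>Z n \<omega> t\<bar> > K} \<omega> \<partial>M n) < ennreal e"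
      using K0[OF that] by (rule le_less_trans[rotated]) (rule SUP_upper, auto)
    moreover have "(\<integral>\<omega>. \<bar>Z n \<omega> t\<bar> * indicator {x. \<bar>x\<bar> > K} (Z n \<omega> t) \<partial>M n) =
        enn2real (\<integral>\<^sup>+\<omega>. ennreal (\<bar>Z n \<omega> t\<bar> * indicator {x. \<bar>x\<bar> > K} (Z n \<omega> t)) \<partial>M n)"
      using Z_meas[OF t, of n] by (intro integral_eq_nn_integral) auto
    moreover have "(\<lambda>\<omega>. ennreal (\<bar>Z n \<omega> t\<bar> * indicator {x. \<bar>x\<bar> > K} (Z n \<omega> t))) =
        (\<lambda>\<omega>. ennreal \<bar>Z n \<omega> t\<bar> * indicator {\<omega>. \<bar>Z n \<omega> t\<bar> > K} \<omega>)"
      by (auto simp: indicator_def)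
    ultimately show ?thesis
      using e by (auto simp: enn2real_leI less_imp_le)
  qed
  then show ?thesis by blast
qed

lemma integral_abs_bounded:
  assumes t: "t \<ge> 0"
  shows "\<exists>C. \<forall>n. (\<integral>\<omega>. \<bar>Z n \<omega> t\<bar> \<partial>M n) \<le> C"
proof -
  obtain K where K: "K \<ge> 0" and tail: "\<And>n. (\<integral>\<omega>. \<bar>Z n \<omega> t\<bar> * indicator {x. \<bar>x\<bar> > K} (Z n \<omega> t) \<partial>M n) \<le> 1"
    using uniform_tail_bound[OF t, of 1] by (metis max.cobounded1 max.cobounded2 zero_less_one)
  have "(\<integral>\<omega>. \<bar>Z n \<omega> t\<bar> \<partial>M n) \<le> K + 1" for n
  proof -
    interpret prob_space "M n" by (rule prob_M)
    have Zn: "integrable (M n) (\<lambda>\<omega>. Z n \<omega> t)" by (rule Z_integrable[OF t])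
    have tail_int: "integrable (M n) (\<lambda>\<omega>. \<bar>Z n \<omega> t\<bar> * indicator {x. \<bar>x\<bar> > K} (Z n \<omega> t))"
      by (rule Bochner_Integration.integrable_bound[OF integrable_abs[OF Zn]])
         (use Z_meas[OF t, of n] in \<open>auto simp: indicator_def\<close>)
    have "(\<integral>\<omega>. \<bar>Z n \<omega> t\<bar> \<partial>M n) \<le> (\<integral>\<omega>. K + \<bar>Z n \<omega> t\<bar> * indicator {x. \<bar>x\<bar> > K} (Z n \<omega> t) \<partial>M n)"
      by (rule integral_mono) (use Zn tail_int K in \<open>auto simp: indicator_def\<close>)
    also have "\<dots> = K + (\<integral>\<omega>. \<bar>Z n \<omega> t\<bar> * indicator {x. \<bar>x\<bar> > K} (Z n \<omega> t) \<partial>M n)"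
      using tail_int by (subst Bochner_Integration.integral_add) (auto simp: prob_space)
    finally show ?thesis using tail[of n] by linarith
  qed
  then show ?thesis by blast
qed

text \<open>Truncations of the limit are limits of truncations, whose integrals are bounded
  uniformly by uniform integrability.\<close>

lemma integrable_limit:
  assumes t: "t \<ge> 0"
  shows "integrable N (\<lambda>\<omega>. \<pi> (V' \<omega> t))"
proof -
  interpret N: prob_space N by (rule prob_N)
  obtain C where C: "\<And>n. (\<integral>\<omega>. \<bar>Z n \<omega> t\<bar> \<partial>M n) \<le> C" using integral_abs_bounded[OF t] by auto
  show ?thesis
  proof (rule integrable_if_truncated_integrals_bounded)
    show "(\<lambda>\<omega>. \<pi> (V' \<omega> t)) \<in> borel_measurable N" using V'_meas[of t] by measurable
    fix K :: real assume K: "K \<ge> 0"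
    define F where "F v = min K \<bar>\<pi> (v t)\<bar>" for v :: "real \<Rightarrow> 'e"
    define Y where "Y n \<omega> = min K \<bar>\<pi> (V n \<omega> t) - Z n \<omega> t\<bar>" for n \<omega>
    have Y_meas: "Y n \<in> borel_measurable (M n)" for n
      unfolding Y_def using V_meas[of n t] Z_meas[OF t, of n] by measurable
    have "bc_functional F"
      unfolding F_def using t K by (intro bc_functionalI[where B=K] tendsto_intros tendsto_\<pi>) auto
    then have lim: "(\<lambda>n. \<integral>\<omega>. F (V n \<omega>) \<partial>M n) \<longlonglongrightarrow> (\<integral>\<omega>. F (V' \<omega>) \<partial>N)"
      by (rule integral_tendsto)
    have "vanishes_in_prob M Y"
      by (rule vanishes_in_prob_le[OF prob_M _ _ Z_close[OF t]]) (use V_meas Z_meas[OF t] in \<open>auto simp: Y_def\<close>)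
    then have Y_lim: "(\<lambda>n. \<integral>\<omega>. Y n \<omega> \<partial>M n) \<longlonglongrightarrow> 0"
      using K by (intro vanishes_in_prob_integral_tendsto_0[OF prob_M Y_meas, where B=K]) (auto simp: Y_def)
    have "(\<integral>\<omega>. F (V n \<omega>) \<partial>M n) \<le> (\<integral>\<omega>. Y n \<omega> \<partial>M n) + C" for n
    proof -
      interpret prob_space "M n" by (rule prob_M)
      have iY: "integrable (M n) (Y n)"
        by (rule integrable_const_bound[where B=K]) (use Y_meas K in \<open>auto simp: Y_def\<close>)
      have iZ: "integrable (M n) (\<lambda>\<omega>. \<bar>Z n \<omega> t\<bar>)" using Z_integrable[OF t] by auto
      have "(\<integral>\<omega>. F (V n \<omega>) \<partial>M n) \<le> (\<integral>\<omega>. Y n \<omega> + \<bar>Z n \<omega> t\<bar> \<partial>M n)"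
      proof (rule integral_mono)
        show "integrable (M n) (\<lambda>\<omega>. F (V n \<omega>))"
          by (rule integrable_const_bound[where B=K]) (use K V_meas[of n t] in \<open>auto simp: F_def\<close>)
        show "F (V n \<omega>) \<le> Y n \<omega> + \<bar>Z n \<omega> t\<bar>" for \<omega>
          unfolding F_def Y_def by (auto simp: min_def abs_if split: if_splits)
      qed (use iY iZ in auto)
      also have "\<dots> = (\<integral>\<omega>. Y n \<omega> \<partial>M n) + (\<integral>\<omega>. \<bar>Z n \<omega> t\<bar> \<partial>M n)"
        using iY iZ by (rule Bochner_Integration.integral_add)
      finally show ?thesis using C[of n] by linarith
    qed
    then have "(\<integral>\<omega>. F (V' \<omega>) \<partial>N) \<le> 0 + C"
      by (intro LIMSEQ_le[OF lim tendsto_add[OF Y_lim tendsto_const]]) auto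
    then show "(\<integral>\<omega>. min K \<bar>\<pi> (V' \<omega> t)\<bar> \<partial>N) \<le> C" by (simp add: F_def)
  qed (rule N.finite_measure_axioms)
qed

end

locale weak_limit_martingale_cylinder =
  weak_limit_martingale M V Vc N V' \<pi> Z
  for M :: "nat \<Rightarrow> 'a measure" and V Vc :: "nat \<Rightarrow> 'a \<Rightarrow> real \<Rightarrow> 'e::{metric_space,second_countable_topology}"
    and N :: "'b measure" and V' \<pi> Z +
  fixes s t L :: real and m :: nat and us :: "nat \<Rightarrow> real" and gs :: "nat \<Rightarrow> 'e \<Rightarrow> real"
  assumes s_nonneg: "0 \<le> s" and s_le_t: "s \<le> t"
    and us: "\<And>i. i < m \<Longrightarrow> 0 \<le> us i \<and> us i \<le> s"
    and gs_bounds: "\<And>i x. i < m \<Longrightarrow> 0 \<le> gs i x \<and> gs i x \<le> 1"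
    and gs_lipschitz: "\<And>i x y. i < m \<Longrightarrow> \<bar>gs i x - gs i y\<bar> \<le> L * dist x y"
    and L_nonneg: "L \<ge> 0"
begin

lemma t_nonneg: "0 \<le> t"
  using s_nonneg s_le_t by linarith

lemma continuous_on_gs: "i < m \<Longrightarrow> continuous_on UNIV (gs i)"
  by (intro lipschitz_on_continuous_on[of L] lipschitz_onI) (auto simp: dist_real_def gs_lipschitz L_nonneg)

lemma borel_measurable_gs: "i < m \<Longrightarrow> gs i \<in> borel_measurable borel"
  by (intro borel_measurable_continuous_onI continuous_on_gs)

lemma cyl_prod_gs_bounds: "0 \<le> cyl_prod m us gs v \<and> cyl_prod m us gs v \<le> 1"
  by (rule cyl_prod_bounds[OF gs_bounds])

definition trunc_increment :: "real \<Rightarrow> (real \<Rightarrow> 'e) \<Rightarrow> real" where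
  "trunc_increment K v = (trunc K (\<pi> (v t)) - trunc K (\<pi> (v s))) * cyl_prod m us gs v"

lemma abs_trunc_increment_le:
  assumes K: "K \<ge> 0"
  shows "\<bar>trunc_increment K v\<bar> \<le> 2 * K"
proof -
  have "\<bar>trunc K (\<pi> (v t)) - trunc K (\<pi> (v s))\<bar> \<le> 2 * K"
    using abs_trunc_le[OF K, of "\<pi> (v t)"] abs_trunc_le[OF K, of "\<pi> (v s)"] by linarith
  then have "\<bar>trunc K (\<pi> (v t)) - trunc K (\<pi> (v s))\<bar> * \<bar>cyl_prod m us gs v\<bar> \<le> 2 * K * 1"
    using cyl_prod_gs_bounds[of v] K by (intro mult_mono) auto
  then show ?thesis unfolding trunc_increment_def abs_mult by simp
qed

lemma bc_functional_trunc_increment: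
  assumes K: "K \<ge> 0"
  shows "bc_functional (trunc_increment K)"
proof (rule bc_functionalI[OF _ abs_trunc_increment_le[OF K]])
  show "trunc_increment K x = trunc_increment K y" if "\<forall>u\<ge>0. x u = y u" for x y
  proof -
    have "cyl_prod m us gs x = cyl_prod m us gs y"
      unfolding cyl_prod_def using that us by (intro prod.cong) auto
    then show ?thesis using that s_nonneg t_nonneg by (simp add: trunc_increment_def)
  qed
  fix xs :: "nat \<Rightarrow> real \<Rightarrow> 'e" and x assume lim: "\<And>u. u \<ge> 0 \<Longrightarrow> (\<lambda>n. xs n u) \<longlonglongrightarrow> x u"
  have "(\<lambda>n. gs i (xs n (us i))) \<longlonglongrightarrow> gs i (x (us i))" if "i < m" for i
    using continuous_on_gs[OF that] lim us[OF that]
    by (intro isCont_tendsto_compose[of _ "gs i"]) (auto simp: continuous_on_eq_continuous_at)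
  then have "(\<lambda>n. cyl_prod m us gs (xs n)) \<longlonglongrightarrow> cyl_prod m us gs x"
    unfolding cyl_prod_def by (intro tendsto_prod) auto
  then show "(\<lambda>n. trunc_increment K (xs n)) \<longlonglongrightarrow> trunc_increment K x"
    unfolding trunc_increment_def by (intro tendsto_intros tendsto_\<pi> lim t_nonneg s_nonneg)
qed

lemma prelimit_cylinder_orthogonal:
  "(\<integral>\<omega>. cyl_prod m us gs (Vc n \<omega>) * (Z n \<omega> t - Z n \<omega> s) \<partial>M n) = 0"
proof (rule integral_mult_eq_0_if_orthogonal_to_sigma[OF prob_M, where B=1])
  let ?G = "\<Union>r\<in>{0..s}. {(\<lambda>\<omega>. Vc n \<omega> r) -` A \<inter> space (M n) | A. A \<in> sets borel}"
  show "?G \<subseteq> sets (M n)"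
    by (auto intro: measurable_sets[OF Vc_meas])
  show "integrable (M n) (\<lambda>\<omega>. Z n \<omega> t - Z n \<omega> s)"
    using Z_integrable[OF t_nonneg] Z_integrable[OF s_nonneg] by auto
  show "(\<integral>\<omega>. indicator A \<omega> * (Z n \<omega> t - Z n \<omega> s) \<partial>M n) = 0" if "A \<in> sigma_sets (space (M n)) ?G" for A
    using Z_increment_orthogonal[OF s_nonneg s_le_t, of A n] that by (simp add: nat_filt_def)
  show "(\<lambda>\<omega>. cyl_prod m us gs (Vc n \<omega>)) \<in> borel_measurable (sigma (space (M n)) ?G)"
  proof (rule borel_measurable_cyl_prod)
    fix i assume "i < m"
    then show "gs i \<in> borel_measurable borel" "(\<lambda>\<omega>. Vc n \<omega> (us i)) \<in> borel_measurable (sigma (space (M n)) ?G)"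
      using us[of i] by (auto intro!: borel_measurable_gs borel_measurable_sigma_nat_filt)
  qed
  show "\<bar>cyl_prod m us gs (Vc n \<omega>)\<bar> \<le> 1" for \<omega>
    using cyl_prod_gs_bounds[of "Vc n \<omega>"] by auto
qed

definition Z_tail :: "real \<Rightarrow> real \<Rightarrow> nat \<Rightarrow> real" where
  "Z_tail u K n = (\<integral>\<omega>. \<bar>Z n \<omega> u\<bar> * indicator {x. \<bar>x\<bar> > K} (Z n \<omega> u) \<partial>M n)"

definition cylinder_error :: "nat \<Rightarrow> nat \<Rightarrow> 'a \<Rightarrow> real" where
  "cylinder_error i n \<omega> = min 1 (L * dist (V n \<omega> (us i)) (Vc n \<omega> (us i)))"

definition increment_error :: "real \<Rightarrow> nat \<Rightarrow> real" where
  "increment_error K n =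
     (\<integral>\<omega>. min (2*K) \<bar>\<pi> (V n \<omega> t) - Z n \<omega> t\<bar> \<partial>M n) + (\<integral>\<omega>. min (2*K) \<bar>\<pi> (V n \<omega> s) - Z n \<omega> s\<bar> \<partial>M n)
       + 2 * (K * (\<Sum>i<m. \<integral>\<omega>. cylinder_error i n \<omega> \<partial>M n))"

lemma abs_cyl_prod_diff_le:
  "\<bar>cyl_prod m us gs (V n \<omega>) - cyl_prod m us gs (Vc n \<omega>)\<bar> \<le> (\<Sum>i<m. cylinder_error i n \<omega>)"
proof -
  have "\<bar>cyl_prod m us gs (V n \<omega>) - cyl_prod m us gs (Vc n \<omega>)\<bar>
      \<le> (\<Sum>i<m. \<bar>gs i (V n \<omega> (us i)) - gs i (Vc n \<omega> (us i))\<bar>)"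
    unfolding cyl_prod_def by (rule abs_prod_diff_le_sum) (use gs_bounds in auto)
  also have "\<dots> \<le> (\<Sum>i<m. cylinder_error i n \<omega>)"
  proof (rule sum_mono)
    fix i assume "i \<in> {..<m}"
    then have "\<bar>gs i (V n \<omega> (us i)) - gs i (Vc n \<omega> (us i))\<bar> \<le> 1"
      and "\<bar>gs i (V n \<omega> (us i)) - gs i (Vc n \<omega> (us i))\<bar> \<le> L * dist (V n \<omega> (us i)) (Vc n \<omega> (us i))"
      using gs_bounds[of i "V n \<omega> (us i)"] gs_bounds[of i "Vc n \<omega> (us i)"] gs_lipschitz[of i] by auto
    then show "\<bar>gs i (V n \<omega> (us i)) - gs i (Vc n \<omega> (us i))\<bar> \<le> cylinder_error i n \<omega>"
      by (simp add: cylinder_error_def)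
  qed
  finally show ?thesis .
qed

lemma prelimit_trunc_increment_bound:
  assumes K: "K \<ge> 0"
  shows "\<bar>\<integral>\<omega>. trunc_increment K (V n \<omega>) \<partial>M n\<bar> \<le> increment_error K n + 2 * Z_tail t K n + 2 * Z_tail s K n"
proof -
  interpret prob_space "M n" by (rule prob_M)
  have [measurable]: "(\<lambda>\<omega>. V n \<omega> u) \<in> borel_measurable (M n)" "(\<lambda>\<omega>. Vc n \<omega> u) \<in> borel_measurable (M n)" for u
    by (rule V_meas Vc_meas)+
  have [measurable]: "(\<lambda>\<omega>. Z n \<omega> t) \<in> borel_measurable (M n)" "(\<lambda>\<omega>. Z n \<omega> s) \<in> borel_measurable (M n)"
    by (rule Z_meas[OF t_nonneg] Z_meas[OF s_nonneg])+
  have cyl_meas[measurable]: "(\<lambda>\<omega>. cyl_prod m us gs (f \<omega>)) \<in> borel_measurable (M n)"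
    if "\<And>u. (\<lambda>\<omega>. f \<omega> u) \<in> borel_measurable (M n)" for f
    using that by (intro borel_measurable_cyl_prod borel_measurable_gs)
  define D where "D \<omega> = (Z n \<omega> t - Z n \<omega> s) * cyl_prod m us gs (Vc n \<omega>)" for \<omega>
  define R where "R \<omega> = min (2*K) \<bar>\<pi> (V n \<omega> t) - Z n \<omega> t\<bar> + min (2*K) \<bar>\<pi> (V n \<omega> s) - Z n \<omega> s\<bar>
      + 2 * (\<bar>Z n \<omega> t\<bar> * indicator {x. \<bar>x\<bar> > K} (Z n \<omega> t)) + 2 * (\<bar>Z n \<omega> s\<bar> * indicator {x. \<bar>x\<bar> > K} (Z n \<omega> s))
      + 2 * (K * (\<Sum>i<m. cylinder_error i n \<omega>))" for \<omega>
  have tail_int: "integrable (M n) (\<lambda>\<omega>. \<bar>Z n \<omega> u\<bar> * indicator {x. \<bar>x\<bar> > K} (Z n \<omega> u))" if "u \<ge> 0" for u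
    by (rule Bochner_Integration.integrable_bound[OF integrable_abs[OF Z_integrable[OF that]]])
       (use Z_meas[OF that] in \<open>auto simp: indicator_def\<close>)
  have err_int: "integrable (M n) (\<lambda>\<omega>. min (2*K) \<bar>\<pi> (V n \<omega> u) - Z n \<omega> u\<bar>)" if "u \<ge> 0" for u
    using K Z_meas[OF that] by (intro integrable_const_bound[where B="2*K"]) auto
  have cyl_int: "integrable (M n) (cylinder_error i n)" for i
    using L_nonneg by (intro integrable_const_bound[where B=1]) (auto simp: cylinder_error_def[abs_def])
  have R_int: "integrable (M n) R" and "(\<integral>\<omega>. R \<omega> \<partial>M n) = increment_error K n + 2 * Z_tail t K n + 2 * Z_tail s K n"
    unfolding R_def increment_error_def Z_tail_def
    using tail_int[OF t_nonneg] tail_int[OF s_nonneg] err_int[OF t_nonneg] err_int[OF s_nonneg] cyl_int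
    by (simp_all add: Bochner_Integration.integral_add Bochner_Integration.integral_sum)
  have F_int: "integrable (M n) (\<lambda>\<omega>. trunc_increment K (V n \<omega>))"
    using abs_trunc_increment_le[OF K] by (intro integrable_const_bound[where B="2*K"]) (auto simp: trunc_increment_def)
  have D_int: "integrable (M n) D"
  proof (rule Bochner_Integration.integrable_bound[where f="\<lambda>\<omega>. Z n \<omega> t - Z n \<omega> s"])
    show "AE \<omega> in M n. norm (D \<omega>) \<le> norm (Z n \<omega> t - Z n \<omega> s)"
      using cyl_prod_gs_bounds by (intro AE_I2) (auto simp: D_def abs_mult intro: mult_left_le)
  qed (use Z_integrable[OF t_nonneg] Z_integrable[OF s_nonneg] in \<open>auto simp: D_def[abs_def]\<close>)
  have pointwise: "\<bar>trunc_increment K (V n \<omega>) - D \<omega>\<bar> \<le> R \<omega>" for \<omega>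
    unfolding trunc_increment_def D_def R_def
    using abs_trunc_increment_diff_le[OF K _ _ _ _ abs_cyl_prod_diff_le] cyl_prod_gs_bounds by auto
  have "\<bar>\<integral>\<omega>. trunc_increment K (V n \<omega>) \<partial>M n\<bar> = \<bar>(\<integral>\<omega>. trunc_increment K (V n \<omega>) \<partial>M n) - (\<integral>\<omega>. D \<omega> \<partial>M n)\<bar>"
    using prelimit_cylinder_orthogonal[of n] by (simp add: D_def mult.commute)
  also have "\<dots> = \<bar>\<integral>\<omega>. trunc_increment K (V n \<omega>) - D \<omega> \<partial>M n\<bar>"
    using F_int D_int by simp
  also have "\<dots> \<le> (\<integral>\<omega>. R \<omega> \<partial>M n)"
    using F_int D_int R_int pointwise by (intro order.trans[OF integral_abs_bound] integral_mono) auto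
  finally show ?thesis using \<open>(\<integral>\<omega>. R \<omega> \<partial>M n) = _\<close> by simp
qed

lemma increment_error_tendsto_0:
  assumes K: "K \<ge> 0"
  shows "(\<lambda>n. increment_error K n) \<longlonglongrightarrow> 0"
proof -
  have [measurable]: "(\<lambda>\<omega>. V n \<omega> u) \<in> borel_measurable (M n)" "(\<lambda>\<omega>. Vc n \<omega> u) \<in> borel_measurable (M n)" for n u
    by (rule V_meas Vc_meas)+
  have err: "(\<lambda>n. \<integral>\<omega>. min (2*K) \<bar>\<pi> (V n \<omega> u) - Z n \<omega> u\<bar> \<partial>M n) \<longlonglongrightarrow> 0" if u: "u \<ge> 0" for u
  proof (rule vanishes_in_prob_integral_tendsto_0[OF prob_M, where B="2*K"])
    show meas: "(\<lambda>\<omega>. min (2*K) \<bar>\<pi> (V n \<omega> u) - Z n \<omega> u\<bar>) \<in> borel_measurable (M n)" for n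
      using Z_meas[OF u, of n] by measurable
    show "vanishes_in_prob M (\<lambda>n \<omega>. min (2*K) \<bar>\<pi> (V n \<omega> u) - Z n \<omega> u\<bar>)"
      by (rule vanishes_in_prob_le[OF prob_M _ _ Z_close[OF u]]) (use Z_meas[OF u] in auto)
  qed (use K in auto)
  have cyl: "(\<lambda>n. \<integral>\<omega>. cylinder_error i n \<omega> \<partial>M n) \<longlonglongrightarrow> 0" if i: "i < m" for i
  proof (rule vanishes_in_prob_integral_tendsto_0[OF prob_M, where B=1])
    show "cylinder_error i n \<in> borel_measurable (M n)" for n
      unfolding cylinder_error_def[abs_def] by measurable
    have L_dist: "vanishes_in_prob M (\<lambda>n \<omega>. L * dist (V n \<omega> (us i)) (Vc n \<omega> (us i)))"
      using us[OF i] by (intro vanishes_in_prob_cmult Vc_close L_nonneg) auto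
    show "vanishes_in_prob M (cylinder_error i)"
    proof (rule vanishes_in_prob_le[OF prob_M _ _ L_dist])
      show "(\<lambda>\<omega>. L * dist (V n \<omega> (us i)) (Vc n \<omega> (us i))) \<in> borel_measurable (M n)" for n
        by measurable
    qed (auto simp: cylinder_error_def)
  qed (use L_nonneg in \<open>auto simp: cylinder_error_def\<close>)
  have "(\<lambda>n. \<Sum>i<m. \<integral>\<omega>. cylinder_error i n \<omega> \<partial>M n) \<longlonglongrightarrow> (\<Sum>i<m. 0)"
    using cyl by (intro tendsto_sum) auto
  then have "(\<lambda>n. increment_error K n) \<longlonglongrightarrow> 0 + 0 + 2 * (K * (\<Sum>i<m. 0))"
    unfolding increment_error_def
    by (intro tendsto_add tendsto_mult_left err t_nonneg s_nonneg)
  then show ?thesis by simp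
qed

lemma limit_trunc_increment_small:
  assumes e: "e > 0"
  shows "\<exists>K0. \<forall>K\<ge>K0. \<bar>\<integral>\<omega>. trunc_increment K (V' \<omega>) \<partial>N\<bar> \<le> 4 * e"
proof -
  obtain K1 where K1: "\<And>K n. K \<ge> K1 \<Longrightarrow> Z_tail t K n \<le> e"
    using uniform_tail_bound[OF t_nonneg e] unfolding Z_tail_def by blast
  obtain K2 where K2: "\<And>K n. K \<ge> K2 \<Longrightarrow> Z_tail s K n \<le> e"
    using uniform_tail_bound[OF s_nonneg e] unfolding Z_tail_def by blast
  have "\<bar>\<integral>\<omega>. trunc_increment K (V' \<omega>) \<partial>N\<bar> \<le> 4 * e" if K: "K \<ge> max (max K1 K2) 0" for K
  proof -
    have "\<bar>\<integral>\<omega>. trunc_increment K (V n \<omega>) \<partial>M n\<bar> \<le> increment_error K n + 4 * e" for n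
      using prelimit_trunc_increment_bound[of K n] K1[of K n] K2[of K n] K by auto
    moreover have "(\<lambda>n. \<bar>\<integral>\<omega>. trunc_increment K (V n \<omega>) \<partial>M n\<bar>) \<longlonglongrightarrow> \<bar>\<integral>\<omega>. trunc_increment K (V' \<omega>) \<partial>N\<bar>"
      using K by (intro tendsto_rabs integral_tendsto bc_functional_trunc_increment) auto
    moreover have "(\<lambda>n. increment_error K n + 4 * e) \<longlonglongrightarrow> 0 + 4 * e"
      using K by (intro tendsto_add increment_error_tendsto_0 tendsto_const) auto
    ultimately show ?thesis by (simp add: LIMSEQ_le)
  qed
  then show ?thesis by blast
qed

lemma limit_trunc_increment_tendsto:
  "(\<lambda>K::nat. \<integral>\<omega>. trunc_increment (real K) (V' \<omega>) \<partial>N) \<longlonglongrightarrow>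
     (\<integral>\<omega>. (\<pi> (V' \<omega> t) - \<pi> (V' \<omega> s)) * cyl_prod m us gs (V' \<omega>) \<partial>N)"
proof (rule integral_dominated_convergence[where w="\<lambda>\<omega>. \<bar>\<pi> (V' \<omega> t)\<bar> + \<bar>\<pi> (V' \<omega> s)\<bar>"])
  have [measurable]: "(\<lambda>\<omega>. V' \<omega> u) \<in> borel_measurable N" for u by (rule V'_meas)
  have [measurable]: "(\<lambda>\<omega>. cyl_prod m us gs (V' \<omega>)) \<in> borel_measurable N"
    by (intro borel_measurable_cyl_prod borel_measurable_gs V'_meas)
  show "(\<lambda>\<omega>. (\<pi> (V' \<omega> t) - \<pi> (V' \<omega> s)) * cyl_prod m us gs (V' \<omega>)) \<in> borel_measurable N"
    by measurable
  show "(\<lambda>\<omega>. trunc_increment (real K) (V' \<omega>)) \<in> borel_measurable N" for K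
    unfolding trunc_increment_def by measurable
  show "integrable N (\<lambda>\<omega>. \<bar>\<pi> (V' \<omega> t)\<bar> + \<bar>\<pi> (V' \<omega> s)\<bar>)"
    using integrable_limit[OF t_nonneg] integrable_limit[OF s_nonneg] by auto
  show "AE \<omega> in N. (\<lambda>K. trunc_increment (real K) (V' \<omega>)) \<longlonglongrightarrow> (\<pi> (V' \<omega> t) - \<pi> (V' \<omega> s)) * cyl_prod m us gs (V' \<omega>)"
  proof (rule AE_I2)
    fix \<omega>
    obtain K0 :: nat where K0: "\<bar>\<pi> (V' \<omega> t)\<bar> + \<bar>\<pi> (V' \<omega> s)\<bar> \<le> real K0" using real_arch_simple by blast
    have "trunc_increment (real K) (V' \<omega>) = (\<pi> (V' \<omega> t) - \<pi> (V' \<omega> s)) * cyl_prod m us gs (V' \<omega>)" if "K \<ge> K0" for K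
      using K0 that by (simp add: trunc_increment_def trunc_eq)
    then show "(\<lambda>K. trunc_increment (real K) (V' \<omega>)) \<longlonglongrightarrow> (\<pi> (V' \<omega> t) - \<pi> (V' \<omega> s)) * cyl_prod m us gs (V' \<omega>)"
      by (intro tendsto_eventually eventually_sequentiallyI[of K0]) auto
  qed
  show "AE \<omega> in N. norm (trunc_increment (real K) (V' \<omega>)) \<le> \<bar>\<pi> (V' \<omega> t)\<bar> + \<bar>\<pi> (V' \<omega> s)\<bar>" for K
  proof (rule AE_I2)
    fix \<omega>
    have "\<bar>trunc (real K) (\<pi> (V' \<omega> t)) - trunc (real K) (\<pi> (V' \<omega> s))\<bar> \<le> \<bar>\<pi> (V' \<omega> t)\<bar> + \<bar>\<pi> (V' \<omega> s)\<bar>"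
      using abs_trunc_le_abs[of "real K" "\<pi> (V' \<omega> t)"] abs_trunc_le_abs[of "real K" "\<pi> (V' \<omega> s)"] by linarith
    then have "\<bar>trunc (real K) (\<pi> (V' \<omega> t)) - trunc (real K) (\<pi> (V' \<omega> s))\<bar> * \<bar>cyl_prod m us gs (V' \<omega>)\<bar>
        \<le> (\<bar>\<pi> (V' \<omega> t)\<bar> + \<bar>\<pi> (V' \<omega> s)\<bar>) * 1"
      using cyl_prod_gs_bounds[of "V' \<omega>"] by (intro mult_mono) auto
    then show "norm (trunc_increment (real K) (V' \<omega>)) \<le> \<bar>\<pi> (V' \<omega> t)\<bar> + \<bar>\<pi> (V' \<omega> s)\<bar>"
      by (simp add: trunc_increment_def abs_mult)
  qed
qed

lemma limit_cylinder_orthogonal: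
  "(\<integral>\<omega>. (\<pi> (V' \<omega> t) - \<pi> (V' \<omega> s)) * cyl_prod m us gs (V' \<omega>) \<partial>N) = 0"
proof -
  let ?I = "\<integral>\<omega>. (\<pi> (V' \<omega> t) - \<pi> (V' \<omega> s)) * cyl_prod m us gs (V' \<omega>) \<partial>N"
  have bound: "\<bar>?I\<bar> \<le> 4 * e" if e: "e > 0" for e
  proof -
    obtain K0 where K0: "\<And>K. K \<ge> K0 \<Longrightarrow> \<bar>\<integral>\<omega>. trunc_increment K (V' \<omega>) \<partial>N\<bar> \<le> 4 * e"
      using limit_trunc_increment_small[OF e] by blast
    obtain k0 :: nat where "K0 \<le> real k0" using real_arch_simple by blast
    then have "\<forall>\<^sub>F K in sequentially. \<bar>\<integral>\<omega>. trunc_increment (real K) (V' \<omega>) \<partial>N\<bar> \<le> 4 * e"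
      by (intro eventually_sequentiallyI[of k0] K0) auto
    then show ?thesis
      by (rule tendsto_upperbound[OF tendsto_rabs[OF limit_trunc_increment_tendsto]]) simp
  qed
  have "\<bar>?I\<bar> \<le> 0 + e" if "e > 0" for e
    using bound[of "e / 4"] that by simp
  then have "\<bar>?I\<bar> \<le> 0" by (rule field_le_epsilon)
  then show ?thesis by simp
qed

end

context weak_limit_martingale
begin

lemma limit_open_cylinder_orthogonal:
  fixes m :: nat and us :: "nat \<Rightarrow> real" and Os :: "nat \<Rightarrow> 'e set"
  assumes s: "0 \<le> s" "s \<le> t" and O: "\<And>i. i < m \<Longrightarrow> 0 \<le> us i \<and> us i \<le> s \<and> open (Os i)"
  shows "(\<integral>\<omega>. (\<pi> (V' \<omega> t) - \<pi> (V' \<omega> s)) * (\<Prod>i<m. indicator (Os i) (V' \<omega> (us i))) \<partial>N) = 0"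
proof -
  have [measurable]: "(\<lambda>\<omega>. V' \<omega> u) \<in> borel_measurable N" for u by (rule V'_meas)
  have approx_0: "(\<integral>\<omega>. (\<pi> (V' \<omega> t) - \<pi> (V' \<omega> s)) * cyl_prod m us (\<lambda>i. approx_indicator j (Os i)) (V' \<omega>) \<partial>N) = 0"
    for j
  proof -
    have "weak_limit_martingale_cylinder M V Vc N V' \<pi> Z s t (real j) m us (\<lambda>i. approx_indicator j (Os i))"
      using O s approx_indicator_bounds approx_indicator_lipschitz
      by (intro weak_limit_martingale_cylinder.intro weak_limit_martingale_axioms
          weak_limit_martingale_cylinder_axioms.intro) auto
    then show ?thesis by (rule weak_limit_martingale_cylinder.limit_cylinder_orthogonal)
  qed
  have "(\<lambda>j. \<integral>\<omega>. (\<pi> (V' \<omega> t) - \<pi> (V' \<omega> s)) * cyl_prod m us (\<lambda>i. approx_indicator j (Os i)) (V' \<omega>) \<partial>N) \<longlonglongrightarrow>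
        (\<integral>\<omega>. (\<pi> (V' \<omega> t) - \<pi> (V' \<omega> s)) * (\<Prod>i<m. indicator (Os i) (V' \<omega> (us i))) \<partial>N)"
  proof (rule integral_dominated_convergence[where w="\<lambda>\<omega>. \<bar>\<pi> (V' \<omega> t) - \<pi> (V' \<omega> s)\<bar>"])
    have "(\<lambda>\<omega>. cyl_prod m us (\<lambda>i. indicator (Os i)) (V' \<omega>)) \<in> borel_measurable N"
      using O by (intro borel_measurable_cyl_prod borel_measurable_indicator) auto
    then show "(\<lambda>\<omega>. (\<pi> (V' \<omega> t) - \<pi> (V' \<omega> s)) * (\<Prod>i<m. indicator (Os i) (V' \<omega> (us i)))) \<in> borel_measurable N"
      unfolding cyl_prod_def by measurable
    fix j
    have "(\<lambda>\<omega>. cyl_prod m us (\<lambda>i. approx_indicator j (Os i)) (V' \<omega>)) \<in> borel_measurable N"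
      by (intro borel_measurable_cyl_prod borel_measurable_continuous_onI continuous_on_approx_indicator V'_meas)
    then show "(\<lambda>\<omega>. (\<pi> (V' \<omega> t) - \<pi> (V' \<omega> s)) * cyl_prod m us (\<lambda>i. approx_indicator j (Os i)) (V' \<omega>)) \<in> borel_measurable N"
      by measurable
    show "AE \<omega> in N. norm ((\<pi> (V' \<omega> t) - \<pi> (V' \<omega> s)) * cyl_prod m us (\<lambda>i. approx_indicator j (Os i)) (V' \<omega>))
        \<le> \<bar>\<pi> (V' \<omega> t) - \<pi> (V' \<omega> s)\<bar>"
    proof (intro AE_I2)
      fix \<omega>
      have "0 \<le> cyl_prod m us (\<lambda>i. approx_indicator j (Os i)) (V' \<omega>) \<and>
          cyl_prod m us (\<lambda>i. approx_indicator j (Os i)) (V' \<omega>) \<le> 1"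
        by (rule cyl_prod_bounds) (rule approx_indicator_bounds)
      then show "norm ((\<pi> (V' \<omega> t) - \<pi> (V' \<omega> s)) * cyl_prod m us (\<lambda>i. approx_indicator j (Os i)) (V' \<omega>))
          \<le> \<bar>\<pi> (V' \<omega> t) - \<pi> (V' \<omega> s)\<bar>"
        by (simp add: abs_mult mult_left_le)
    qed
  next
    show "integrable N (\<lambda>\<omega>. \<bar>\<pi> (V' \<omega> t) - \<pi> (V' \<omega> s)\<bar>)"
      using integrable_limit[of t] integrable_limit[of s] s by auto
    show "AE \<omega> in N. (\<lambda>j. (\<pi> (V' \<omega> t) - \<pi> (V' \<omega> s)) * cyl_prod m us (\<lambda>i. approx_indicator j (Os i)) (V' \<omega>))
        \<longlonglongrightarrow> (\<pi> (V' \<omega> t) - \<pi> (V' \<omega> s)) * (\<Prod>i<m. indicator (Os i) (V' \<omega> (us i)))"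
      unfolding cyl_prod_def using O
      by (intro AE_I2 tendsto_mult tendsto_const tendsto_prod approx_indicator_tendsto) auto
  qed
  then show ?thesis using approx_0 by (simp add: LIMSEQ_const_iff)
qed

lemma limit_increment_orthogonal:
  assumes s: "0 \<le> s" "s \<le> t" and A: "A \<in> nat_filt N V' s"
  shows "(\<integral>\<omega>. indicator A \<omega> * (\<pi> (V' \<omega> t) - \<pi> (V' \<omega> s)) \<partial>N) = 0"
proof (rule integral_indicator_eq_0_sigma_sets)
  show "integrable N (\<lambda>\<omega>. \<pi> (V' \<omega> t) - \<pi> (V' \<omega> s))"
    using integrable_limit[of t] integrable_limit[of s] s by auto
  show "open_cylinder_sets N V' s \<subseteq> sets N"
    by (rule open_cylinder_sets_subset_sets[OF V'_meas])
  show "A \<in> sigma_sets (space N) (open_cylinder_sets N V' s)"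
    using A nat_filt_subset_sigma_open_cylinder_sets by blast
  fix B assume "B \<in> open_cylinder_sets N V' s"
  then obtain m :: nat and us :: "nat \<Rightarrow> real" and Os :: "nat \<Rightarrow> 'e set"
    where B: "B = space N \<inter> (\<Inter>i<m. (\<lambda>\<omega>. V' \<omega> (us i)) -` Os i)"
      and O: "\<And>i. i < m \<Longrightarrow> 0 \<le> us i \<and> us i \<le> s \<and> open (Os i)"
    by (rule open_cylinder_setsE) blast
  have "indicator B \<omega> = (\<Prod>i<m. indicator (Os i) (V' \<omega> (us i)) :: real)" if "\<omega> \<in> space N" for \<omega>
    using that unfolding B by (simp add: indicator_def prod_zero_iff)
  then have "(\<integral>\<omega>. indicator B \<omega> * (\<pi> (V' \<omega> t) - \<pi> (V' \<omega> s)) \<partial>N)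
      = (\<integral>\<omega>. (\<pi> (V' \<omega> t) - \<pi> (V' \<omega> s)) * (\<Prod>i<m. indicator (Os i) (V' \<omega> (us i))) \<partial>N)"
    by (intro Bochner_Integration.integral_cong) (auto simp: mult.commute)
  also have "\<dots> = 0" by (rule limit_open_cylinder_orthogonal[OF s O])
  finally show "(\<integral>\<omega>. indicator B \<omega> * (\<pi> (V' \<omega> t) - \<pi> (V' \<omega> s)) \<partial>N) = 0" .
qed (rule Int_stable_open_cylinder_sets space_in_open_cylinder_sets)+

theorem limit_martingale: "martingale N (nat_filt N V') (\<lambda>\<omega> t. \<pi> (V' \<omega> t))"
  by (intro martingaleI_orthogonal nat_filt_adapted nat_filt_subset_sets V'_meas integrable_limit
      limit_increment_orthogonal borel_measurable_\<pi>)

end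

lemma cpath_continuous_at_right:
  assumes "cpath x" "t \<ge> 0"
  shows "continuous (at_right t) x"
proof -
  have "continuous (at t within {0..}) x"
    using assms unfolding cpath_def by (auto simp: continuous_on_eq_continuous_within)
  then show ?thesis by (rule continuous_within_subset) (use assms(2) in auto)
qed

lemma vanishes_in_prob_cpath_minus_cadlag:
  fixes U Uc :: "nat \<Rightarrow> 'a \<Rightarrow> real \<Rightarrow> 'e::{real_normed_vector,second_countable_topology}"
  assumes P: "\<And>n. prob_space (M n)" and conv: "conv_prob_zero M (\<lambda>n \<omega> t. U n \<omega> t - Uc n \<omega> t)"
    and meas: "\<And>n t. (\<lambda>\<omega>. U n \<omega> t) \<in> borel_measurable (M n)" "\<And>n t. (\<lambda>\<omega>. Uc n \<omega> t) \<in> borel_measurable (M n)"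
    and paths: "\<And>n \<omega>. \<omega> \<in> space (M n) \<Longrightarrow> cpath (U n \<omega>) \<and> cadlag (Uc n \<omega>)"
    and t: "t \<ge> 0"
  shows "vanishes_in_prob M (\<lambda>n \<omega>. norm (U n \<omega> t - Uc n \<omega> t))"
proof (rule vanishes_in_prob_at_if_conv_prob_zero[OF P conv _ _ t])
  show "(\<lambda>\<omega>. U n \<omega> u - Uc n \<omega> u) \<in> borel_measurable (M n)" for n u
    using meas by measurable
  show "continuous (at_right u) (\<lambda>u. U n \<omega> u - Uc n \<omega> u)" if "\<omega> \<in> space (M n)" "u \<ge> 0" for n \<omega> u
  proof (rule continuous_diff)
    show "continuous (at_right u) (U n \<omega>)"
      using paths[OF that(1)] that(2) by (intro cpath_continuous_at_right) auto
    show "continuous (at_right u) (Uc n \<omega>)"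
      using paths[OF that(1)] that(2) unfolding cadlag_def by auto
  qed
qed

lemma vanishes_in_prob_inner_increment:
  fixes X Xc :: "nat \<Rightarrow> 'a \<Rightarrow> real \<Rightarrow> 'd::euclidean_space"
  assumes P: "\<And>n. prob_space (M n)"
    and meas [measurable]: "\<And>n t. (\<lambda>\<omega>. X n \<omega> t) \<in> borel_measurable (M n)"
      "\<And>n t. (\<lambda>\<omega>. Xc n \<omega> t) \<in> borel_measurable (M n)"
    and close_t: "vanishes_in_prob M (\<lambda>n \<omega>. norm (X n \<omega> t - Xc n \<omega> t))"
    and close_0: "vanishes_in_prob M (\<lambda>n \<omega>. norm (X n \<omega> 0 - Xc n \<omega> 0))"
    and X0: "vanishes_in_prob M (\<lambda>n \<omega>. norm (X n \<omega> 0))"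
    and b: "b \<in> Basis"
  shows "vanishes_in_prob M (\<lambda>n \<omega>. \<bar>X n \<omega> t \<bullet> b - (Xc n \<omega> t - Xc n \<omega> 0) \<bullet> b\<bar>)"
proof (rule vanishes_in_prob_le_add[OF P _ _ _ close_t vanishes_in_prob_le_add[OF P _ _ _ close_0 X0]])
  fix n \<omega>
  have "\<bar>X n \<omega> t \<bullet> b - (Xc n \<omega> t - Xc n \<omega> 0) \<bullet> b\<bar> = \<bar>(X n \<omega> t - Xc n \<omega> t + (Xc n \<omega> 0 - X n \<omega> 0) + X n \<omega> 0) \<bullet> b\<bar>"
    by (simp add: inner_diff_left inner_add_left)
  also have "\<dots> \<le> norm (X n \<omega> t - Xc n \<omega> t + (Xc n \<omega> 0 - X n \<omega> 0) + X n \<omega> 0)"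
    by (rule Basis_le_norm[OF b])
  also have "\<dots> \<le> norm (X n \<omega> t - Xc n \<omega> t) + (norm (X n \<omega> 0 - Xc n \<omega> 0) + norm (X n \<omega> 0))"
    by (metis (no_types) add.assoc norm_minus_commute norm_triangle_ineq order.trans add_left_mono)
  finally show "\<bar>X n \<omega> t \<bullet> b - (Xc n \<omega> t - Xc n \<omega> 0) \<bullet> b\<bar>
      \<le> norm (X n \<omega> t - Xc n \<omega> t) + (norm (X n \<omega> 0 - Xc n \<omega> 0) + norm (X n \<omega> 0))" .
qed measurable

lemma vanishes_in_prob_dist_triple:
  fixes A Ac :: "nat \<Rightarrow> 'a \<Rightarrow> 'x::{real_normed_vector,second_countable_topology}"
    and B Bc :: "nat \<Rightarrow> 'a \<Rightarrow> 'y::{real_normed_vector,second_countable_topology}"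
    and C Cc :: "nat \<Rightarrow> 'a \<Rightarrow> 'z::{real_normed_vector,second_countable_topology}"
  assumes P: "\<And>n. prob_space (M n)"
    and meas [measurable]: "\<And>n. A n \<in> borel_measurable (M n)" "\<And>n. Ac n \<in> borel_measurable (M n)"
      "\<And>n. B n \<in> borel_measurable (M n)" "\<And>n. Bc n \<in> borel_measurable (M n)"
      "\<And>n. C n \<in> borel_measurable (M n)" "\<And>n. Cc n \<in> borel_measurable (M n)"
    and A: "vanishes_in_prob M (\<lambda>n \<omega>. norm (A n \<omega> - Ac n \<omega>))"
    and B: "vanishes_in_prob M (\<lambda>n \<omega>. norm (B n \<omega> - Bc n \<omega>))"
    and C: "vanishes_in_prob M (\<lambda>n \<omega>. norm (C n \<omega> - Cc n \<omega>))"
  shows "vanishes_in_prob M (\<lambda>n \<omega>. dist (A n \<omega>, B n \<omega>, C n \<omega>) (Ac n \<omega>, Bc n \<omega>, Cc n \<omega>))"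
proof (rule vanishes_in_prob_le_add[OF P _ _ _ A vanishes_in_prob_le_add[OF P _ _ _ B C]])
  fix n \<omega>
  show "dist (A n \<omega>, B n \<omega>, C n \<omega>) (Ac n \<omega>, Bc n \<omega>, Cc n \<omega>)
      \<le> norm (A n \<omega> - Ac n \<omega>) + (norm (B n \<omega> - Bc n \<omega>) + norm (C n \<omega> - Cc n \<omega>))"
    unfolding dist_norm by (simp add: order.trans[OF norm_Pair_le add_left_mono[OF norm_Pair_le]])
qed measurable

lemma limit_coordinate_martingale:
  fixes W X Wc Xc :: "nat \<Rightarrow> 'a \<Rightarrow> real \<Rightarrow> 'd::euclidean_space"
    and Y Yc :: "nat \<Rightarrow> 'a \<Rightarrow> real \<Rightarrow> 'k::euclidean_space"
    and V' :: "'b \<Rightarrow> real \<Rightarrow> 'd \<times> 'd \<times> 'k"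
  assumes P: "\<And>n. prob_space (M n)" and prob_N: "prob_space N"
    and meas [measurable]: "\<And>n t. (\<lambda>\<omega>. W n \<omega> t) \<in> borel_measurable (M n)"
      "\<And>n t. (\<lambda>\<omega>. X n \<omega> t) \<in> borel_measurable (M n)" "\<And>n t. (\<lambda>\<omega>. Y n \<omega> t) \<in> borel_measurable (M n)"
      "\<And>n t. (\<lambda>\<omega>. Wc n \<omega> t) \<in> borel_measurable (M n)" "\<And>n t. (\<lambda>\<omega>. Xc n \<omega> t) \<in> borel_measurable (M n)"
      "\<And>n t. (\<lambda>\<omega>. Yc n \<omega> t) \<in> borel_measurable (M n)"
      "\<And>t. (\<lambda>\<omega>. V' \<omega> t) \<in> borel_measurable N"
    and close: "\<And>t. t \<ge> 0 \<Longrightarrow> vanishes_in_prob M (\<lambda>n \<omega>. norm (W n \<omega> t - Wc n \<omega> t))"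
      "\<And>t. t \<ge> 0 \<Longrightarrow> vanishes_in_prob M (\<lambda>n \<omega>. norm (X n \<omega> t - Xc n \<omega> t))"
      "\<And>t. t \<ge> 0 \<Longrightarrow> vanishes_in_prob M (\<lambda>n \<omega>. norm (Y n \<omega> t - Yc n \<omega> t))"
    and X0: "vanishes_in_prob M (\<lambda>n \<omega>. norm (X n \<omega> 0))"
    and ui: "\<And>t. t \<ge> 0 \<Longrightarrow> unif_integrable M (\<lambda>n \<omega>. Xc n \<omega> t - Xc n \<omega> 0)"
    and mart: "\<And>n. martingale (M n) (nat_filt (M n) (\<lambda>\<omega> s. (Wc n \<omega> s, Xc n \<omega> s, Yc n \<omega> s)))
                  (\<lambda>\<omega> t. Xc n \<omega> t - Xc n \<omega> 0)"
    and r: "strict_mono r"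
    and lim: "conv_dist (\<lambda>n. M (r n)) (\<lambda>n \<omega> t. (W (r n) \<omega> t, X (r n) \<omega> t, Y (r n) \<omega> t)) N V'"
    and b: "b \<in> Basis"
  shows "martingale N (nat_filt N V') (\<lambda>\<omega> t. fst (snd (V' \<omega> t)) \<bullet> b)"
proof -
  define V where "V n \<omega> t = (W (r n) \<omega> t, X (r n) \<omega> t, Y (r n) \<omega> t)" for n \<omega> t
  define Vc where "Vc n \<omega> t = (Wc (r n) \<omega> t, Xc (r n) \<omega> t, Yc (r n) \<omega> t)" for n \<omega> t
  have "weak_limit_martingale (\<lambda>n. M (r n)) V Vc N V' (\<lambda>v. fst (snd v) \<bullet> b)
      (\<lambda>n \<omega> t. (Xc (r n) \<omega> t - Xc (r n) \<omega> 0) \<bullet> b)"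
  proof (rule weak_limit_martingale.intro)
    show "prob_space (M (r n))" for n by (rule P)
    show "prob_space N" by (rule prob_N)
    show "(\<lambda>\<omega>. V n \<omega> t) \<in> borel_measurable (M (r n))" "(\<lambda>\<omega>. Vc n \<omega> t) \<in> borel_measurable (M (r n))" for n t
      unfolding V_def Vc_def by measurable
    show "(\<lambda>\<omega>. V' \<omega> t) \<in> borel_measurable N" for t by (rule meas(7))
    show "conv_dist (\<lambda>n. M (r n)) V N V'" unfolding V_def by (rule lim)
    show "continuous_on UNIV (\<lambda>v::'d \<times> 'd \<times> 'k. fst (snd v) \<bullet> b)"
      by (intro continuous_intros)
    fix t :: real assume t: "t \<ge> 0"
    have "vanishes_in_prob M (\<lambda>n \<omega>. \<bar>X n \<omega> t \<bullet> b - (Xc n \<omega> t - Xc n \<omega> 0) \<bullet> b\<bar>)"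
      by (rule vanishes_in_prob_inner_increment[OF P meas(2,5) close(2)[OF t] close(2)[OF order_refl] X0 b])
    then show "vanishes_in_prob (\<lambda>n. M (r n))
        (\<lambda>n \<omega>. \<bar>fst (snd (V n \<omega> t)) \<bullet> b - (Xc (r n) \<omega> t - Xc (r n) \<omega> 0) \<bullet> b\<bar>)"
      using vanishes_in_prob_subseq[OF _ r] by (simp add: V_def)
    have "vanishes_in_prob M (\<lambda>n \<omega>. dist (W n \<omega> t, X n \<omega> t, Y n \<omega> t) (Wc n \<omega> t, Xc n \<omega> t, Yc n \<omega> t))"
      by (rule vanishes_in_prob_dist_triple[OF P _ _ _ _ _ _ close[OF t]]) measurable
    then show "vanishes_in_prob (\<lambda>n. M (r n)) (\<lambda>n \<omega>. dist (V n \<omega> t) (Vc n \<omega> t))"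
      using vanishes_in_prob_subseq[OF _ r] by (simp add: V_def Vc_def)
    show "unif_integrable (\<lambda>n. M (r n)) (\<lambda>n \<omega>. (Xc (r n) \<omega> t - Xc (r n) \<omega> 0) \<bullet> b)"
      by (rule unif_integrable_subseq_le[OF ui[OF t]]) (simp add: Basis_le_norm[OF b])
  next
    fix n
    have "nat_filt (M (r n)) (Vc n) s \<subseteq> sets (M (r n))" for s
      by (rule nat_filt_subset_sets) (simp add: Vc_def)
    then show "martingale (M (r n)) (nat_filt (M (r n)) (Vc n)) (\<lambda>\<omega> t. (Xc (r n) \<omega> t - Xc (r n) \<omega> 0) \<bullet> b)"
      using martingale_inner[OF mart[of "r n"]] by (simp add: Vc_def[abs_def])
  qed
  then show ?thesis by (rule weak_limit_martingale.limit_martingale)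
qed

theorem proposition6p5:
  fixes R :: "real^'k^'d"
    and f :: "'k \<Rightarrow> 'd set"
    and M :: "nat \<Rightarrow> 'a measure"
    and W X :: "nat \<Rightarrow> 'a \<Rightarrow> real \<Rightarrow> real^'d"
    and Y :: "nat \<Rightarrow> 'a \<Rightarrow> real \<Rightarrow> real^'k"
    and Wc Xc :: "nat \<Rightarrow> 'a \<Rightarrow> real \<Rightarrow> real^'d"
    and Yc :: "nat \<Rightarrow> 'a \<Rightarrow> real \<Rightarrow> real^'k"
    and N :: "'b measure"
    and V' :: "'b \<Rightarrow> real \<Rightarrow> (real^'d) \<times> (real^'d) \<times> (real^'k)"
    and r :: "nat \<Rightarrow> nat"
  assumes dk: "CARD('d) \<le> CARD('k)"
    and prob: "\<And>n. prob_space (M n)"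
    and meas: "\<And>n t. (\<lambda>\<omega>. W n \<omega> t) \<in> borel_measurable (M n)"
              "\<And>n t. (\<lambda>\<omega>. X n \<omega> t) \<in> borel_measurable (M n)"
              "\<And>n t. (\<lambda>\<omega>. Y n \<omega> t) \<in> borel_measurable (M n)"
    and cont: "\<And>n \<omega>. \<omega> \<in> space (M n) \<Longrightarrow> cpath (W n \<omega>) \<and> cpath (X n \<omega>) \<and> cpath (Y n \<omega>)"
    and i: "\<And>n \<omega> t. \<omega> \<in> space (M n) \<Longrightarrow> t \<ge> 0 \<Longrightarrow> W n \<omega> t = X n \<omega> t + R *v Y n \<omega> t"
    and ii: "\<And>n. AE \<omega> in M n. \<forall>t\<ge>0. \<forall>l. 0 \<le> W n \<omega> t $ l"
    and iii: "\<exists>(L :: 'c measure) \<Sigma> B. transpose \<Sigma> = \<Sigma> \<and> (\<forall>u. 0 \<le> u \<bullet> (\<Sigma> *v u)) \<and>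
                 brownian_motion L \<Sigma> B \<and> conv_dist M X L B"
    and iv: "\<exists>\<delta>::nat \<Rightarrow> real. \<delta> \<longlonglongrightarrow> 0 \<and>
               (\<forall>n. AE \<omega> in M n. \<forall>j.
                  Y n \<omega> 0 $ j = 0 \<and> mono_on {0..} (\<lambda>t. Y n \<omega> t $ j) \<and>
                  (\<integral>\<^sup>+s. indicator {s. \<exists>l\<in>f j. W n \<omega> s $ l > \<delta> n} s
                     \<partial>interval_measure (\<lambda>t. Y n \<omega> (max 0 t) $ j)) = 0)"
    and measc: "\<And>n t. (\<lambda>\<omega>. Wc n \<omega> t) \<in> borel_measurable (M n)"
               "\<And>n t. (\<lambda>\<omega>. Xc n \<omega> t) \<in> borel_measurable (M n)"
               "\<And>n t. (\<lambda>\<omega>. Yc n \<omega> t) \<in> borel_measurable (M n)"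
    and cadl: "\<And>n \<omega>. \<omega> \<in> space (M n) \<Longrightarrow> cadlag (Wc n \<omega>) \<and> cadlag (Xc n \<omega>) \<and> cadlag (Yc n \<omega>)"
    and close: "conv_prob_zero M (\<lambda>n \<omega> t. X n \<omega> t - Xc n \<omega> t)"
               "conv_prob_zero M (\<lambda>n \<omega> t. Y n \<omega> t - Yc n \<omega> t)"
               "conv_prob_zero M (\<lambda>n \<omega> t. W n \<omega> t - Wc n \<omega> t)"
    and ui: "\<And>t. t \<ge> 0 \<Longrightarrow> unif_integrable M (\<lambda>n \<omega>. Xc n \<omega> t - Xc n \<omega> 0)"
    and mart: "\<And>n. martingale (M n) (nat_filt (M n) (\<lambda>\<omega> s. (Wc n \<omega> s, Xc n \<omega> s, Yc n \<omega> s)))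
                      (\<lambda>\<omega> t. Xc n \<omega> t - Xc n \<omega> 0)"
    and limN: "prob_space N"
    and limmeas: "\<And>t. (\<lambda>\<omega>. V' \<omega> t) \<in> borel_measurable N"
    and limcont: "\<And>\<omega>. \<omega> \<in> space N \<Longrightarrow> cpath (V' \<omega>)"
    and sub: "strict_mono r"
    and lim: "conv_dist (\<lambda>n. M (r n)) (\<lambda>n \<omega> t. (W (r n) \<omega> t, X (r n) \<omega> t, Y (r n) \<omega> t)) N V'"
  shows "martingale N (nat_filt N V') (\<lambda>\<omega> t. fst (snd (V' \<omega> t)))"
proof -
  obtain L :: "'c measure" and \<Sigma> B where BM: "brownian_motion L \<Sigma> B" and X_B: "conv_dist M X L B"
    using iii by blast
  have X0: "vanishes_in_prob M (\<lambda>n \<omega>. norm (X n \<omega> 0))"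
    using BM by (intro vanishes_in_prob_at_0_if_conv_dist[OF prob X_B]) (auto simp: brownian_motion_def meas)
  have close: "vanishes_in_prob M (\<lambda>n \<omega>. norm (W n \<omega> t - Wc n \<omega> t))"
      "vanishes_in_prob M (\<lambda>n \<omega>. norm (X n \<omega> t - Xc n \<omega> t))"
      "vanishes_in_prob M (\<lambda>n \<omega>. norm (Y n \<omega> t - Yc n \<omega> t))" if "t \<ge> 0" for t
    using cont cadl that
    by (auto intro!: vanishes_in_prob_cpath_minus_cadlag[OF prob] close meas measc)
  have [measurable]: "(\<lambda>\<omega>. V' \<omega> t) \<in> borel_measurable N" for t by (rule limmeas)
  show ?thesis
  proof (rule martingale_BasisI)
    show "(\<lambda>\<omega>. fst (snd (V' \<omega> t))) -` A \<inter> space N \<in> nat_filt N V' t" if "t \<ge> 0" "A \<in> sets borel" for t A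
      using that by (intro nat_filt_adapted borel_measurable_continuous_onI continuous_intros)
    show "nat_filt N V' s \<subseteq> sets N" for s
      by (rule nat_filt_subset_sets) measurable
    show "martingale N (nat_filt N V') (\<lambda>\<omega> t. fst (snd (V' \<omega> t)) \<bullet> b)" if "b \<in> Basis" for b
      by (rule limit_coordinate_martingale[OF prob limN meas measc limmeas close X0 ui mart sub lim that])
  qed
qed

end
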